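(* Let $\mathcal{P} \subseteq \mathbb{C}^{n_p}$ be closed under conjugation ($\overline{\mathsf{p}} \in \mathcal{P}$ for all $\mathsf{p} \in \mathcal{P}$), and let $\mu$ be a measure on $\mathcal{P}$ closed under conjugation (for every measurable $S$, $\overline{S}$ is measurable and $\mu(\overline{S}) = \mu(S)$). Let $y\colon \mathcal{P} \to \mathbb{C}^{n_o \times n_i}$ be measurable, closed under conjugation ($\overline{y(\mathsf{p})} = y(\overline{\mathsf{p}})$ for all $\mathsf{p}$), and square integrable, i.e. $\int_{\mathcal{P}} \|y(\mathsf{p})\|_F^2 \,d\mu(\mathsf{p}) < \infty$. Let $\hat{\alpha}_i, \hat{\beta}_j, \hat{\gamma}_k\colon \mathcal{P} \to \mathbb{C}$ ($i = 1,\dots,q_A$, $j = 1,\dots,q_B$, $k=1,\dots,q_C$) be measurable, closed under conjugation, and satisfy \[ \int_{\mathcal{P}} \left( \frac{\sum_{j=1}^{q_B} |\hat{\beta}_j(\mathsf{p})| \sum_{k=1}^{q_C} |\hat{\gamma}_k(\mathsf{p})|}{\sum_{i=1}^{q_A} |\hat{\alpha}_i(\mathsf{p})|} \right)^{2} d\mu(\mathsf{p}) < \infty . \] For real matrices $\hat{A}_i \in \mathbb{R}^{r \times r}$, $\hat{B}_j \in \mathbb{R}^{r \times n_i}$, $\hat{C}_k \in \mathbb{R}^{n_o \times r}$ put $\hat{\mathcal{A}}(\mathsf{p}) = \sum_{i} \hat{\alpha}_i(\mathsf{p}) \hat{A}_i$, $\hat{\mathcal{B}}(\mathsf{p}) =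 \sum_j \hat{\beta}_j(\mathsf{p}) \hat{B}_j$, $\hat{\mathcal{C}}(\mathsf{p}) = \sum_k \hat{\gamma}_k(\mathsf{p}) \hat{C}_k$, and, where $\hat{\mathcal{A}}(\mathsf{p})$ is invertible, define the reduced state $\hat{x}(\mathsf{p}) = \hat{\mathcal{A}}(\mathsf{p})^{-1} \hat{\mathcal{B}}(\mathsf{p}) \in \mathbb{C}^{r \times n_i}$, the reduced output $\hat{y}(\mathsf{p}) = \hat{\mathcal{C}}(\mathsf{p}) \hat{x}(\mathsf{p})$, and the reduced dual state $\hat{x}_d(\mathsf{p}) \in \mathbb{C}^{r \times n_o}$ by $\hat{\mathcal{A}}(\mathsf{p})^{*} \hat{x}_d(\mathsf{p}) = \hat{\mathcal{C}}(\mathsf{p})^{*}$. Suppose the matrices $\hat{A}_1, \dots, \hat{A}_{q_A}$ satisfy $\operatorname{ess\,sup}_{\mathsf{p} \in \mathcal{P}} \|\hat{\alpha}_i(\mathsf{p}) \hat{\mathcal{A}}(\mathsf{p})^{-1}\|_F < \infty$ for $i = 1, \dots, q_A$, and that $(\hat{A}_i, \hat{B}_j, \hat{C}_k)$ is $\mathcal{L}_2$-optimal, i.e. minimizes $\mathcal{J}(\hat{A}_i,\hat{B}_j,\hat{C}_k) = \int_{\mathcal{P}} \|y(\mathsf{p}) - \hat{y}(\mathsf{p})\|_F^2 \, d\mu(\mathsf{p})$. Then \begin{align*} \int_{\mathcal{P}} \hat{\gamma}_k(\overline{\mathsf{p}})\, y(\mathsf{p}) \hat{x}(\mathsf{p})^{*}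 \, d\mu(\mathsf{p}) &= \int_{\mathcal{P}} \hat{\gamma}_k(\overline{\mathsf{p}})\, \hat{y}(\mathsf{p}) \hat{x}(\mathsf{p})^{*} \, d\mu(\mathsf{p}), & k &= 1,\dots,q_C,\\ \int_{\mathcal{P}} \hat{\beta}_j(\overline{\mathsf{p}})\, \hat{x}_d(\mathsf{p}) y(\mathsf{p}) \, d\mu(\mathsf{p}) &= \int_{\mathcal{P}} \hat{\beta}_j(\overline{\mathsf{p}})\, \hat{x}_d(\mathsf{p}) \hat{y}(\mathsf{p}) \, d\mu(\mathsf{p}), & j &= 1,\dots,q_B,\\ \int_{\mathcal{P}} \hat{\alpha}_i(\overline{\mathsf{p}})\, \hat{x}_d(\mathsf{p}) y(\mathsf{p}) \hat{x}(\mathsf{p})^{*} \, d\mu(\mathsf{p}) &= \int_{\mathcal{P}} \hat{\alpha}_i(\overline{\mathsf{p}})\, \hat{x}_d(\mathsf{p}) \hat{y}(\mathsf{p}) \hat{x}(\mathsf{p})^{*} \, d\mu(\mathsf{p}), & i &= 1,\dots,q_A. \end{align*}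
   Context: $\|\cdot\|_F$ is the Frobenius norm and $(\cdot)^{*}$ the conjugate transpose. The minimization of $\mathcal{J}$ is over all real matrices $\hat{A}_i \in \mathbb{R}^{r\times r}$, $\hat{B}_j \in \mathbb{R}^{r \times n_i}$, $\hat{C}_k \in \mathbb{R}^{n_o \times r}$ with the scalar functions $\hat{\alpha}_i,\hat{\beta}_j,\hat{\gamma}_k$ and the reduced order $r$ fixed. *)

theory Defs
  imports "HOL-Analysis.Analysis" "HOL-Probability.Essential_Supremum"
begin

definition vconj :: "complex^'n \<Rightarrow> complex^'n" where
  "vconj p = (\<chi> i. cnj (p $ i))"

definition mconj :: "complex^'n^'m \<Rightarrow> complex^'n^'m" where
  "mconj M = (\<chi> a b. cnj (M $ a $ b))"

definition mstar :: "complex^'n^'m \<Rightarrow> complex^'m^'n" where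
  "mstar M = transpose (mconj M)"

definition fro_norm :: "complex^'n^'m \<Rightarrow> real" where
  "fro_norm M = sqrt (\<Sum>a\<in>UNIV. \<Sum>b\<in>UNIV. (cmod (M $ a $ b))\<^sup>2)"

definition cmat :: "real^'n^'m \<Rightarrow> complex^'n^'m" where
  "cmat A = (\<chi> a b. complex_of_real (A $ a $ b))"

definition cscale :: "complex \<Rightarrow> complex^'n^'m \<Rightarrow> complex^'n^'m" where
  "cscale c M = (\<chi> a b. c * M $ a $ b)"

text \<open>Affine parameter dependence \<open>\<Sum>_{i<q} f_i(p) M_i\<close> (indices \<open>0..q-1\<close>).\<close>
definition pmat :: "nat \<Rightarrow> (nat \<Rightarrow> 'p \<Rightarrow> complex) \<Rightarrow> (nat \<Rightarrow> real^'n^'m) \<Rightarrow> 'p \<Rightarrow> complex^'n^'m" where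
  "pmat q f M p = (\<Sum>i<q. cscale (f i p) (cmat (M i)))"

definition xhat :: "nat \<Rightarrow> (nat \<Rightarrow> 'p \<Rightarrow> complex) \<Rightarrow> (nat \<Rightarrow> real^'r^'r)
   \<Rightarrow> nat \<Rightarrow> (nat \<Rightarrow> 'p \<Rightarrow> complex) \<Rightarrow> (nat \<Rightarrow> real^'ni^'r) \<Rightarrow> 'p \<Rightarrow> complex^'ni^'r" where
  "xhat qA \<alpha> A qB \<beta> B p = matrix_inv (pmat qA \<alpha> A p) ** pmat qB \<beta> B p"

definition yhat :: "nat \<Rightarrow> (nat \<Rightarrow> 'p \<Rightarrow> complex) \<Rightarrow> (nat \<Rightarrow> real^'r^'r)
   \<Rightarrow> nat \<Rightarrow> (nat \<Rightarrow> 'p \<Rightarrow> complex) \<Rightarrow> (nat \<Rightarrow> real^'ni^'r)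
   \<Rightarrow> nat \<Rightarrow> (nat \<Rightarrow> 'p \<Rightarrow> complex) \<Rightarrow> (nat \<Rightarrow> real^'r^'no) \<Rightarrow> 'p \<Rightarrow> complex^'ni^'no" where
  "yhat qA \<alpha> A qB \<beta> B qC \<gamma> C p = pmat qC \<gamma> C p ** xhat qA \<alpha> A qB \<beta> B p"

definition xdual :: "nat \<Rightarrow> (nat \<Rightarrow> 'p \<Rightarrow> complex) \<Rightarrow> (nat \<Rightarrow> real^'r^'r)
   \<Rightarrow> nat \<Rightarrow> (nat \<Rightarrow> 'p \<Rightarrow> complex) \<Rightarrow> (nat \<Rightarrow> real^'r^'no) \<Rightarrow> 'p \<Rightarrow> complex^'no^'r" where
  "xdual qA \<alpha> A qC \<gamma> C p = matrix_inv (mstar (pmat qA \<alpha> A p)) ** mstar (pmat qC \<gamma> C p)"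

definition Jerr :: "'p measure \<Rightarrow> ('p \<Rightarrow> complex^'ni^'no)
   \<Rightarrow> nat \<Rightarrow> (nat \<Rightarrow> 'p \<Rightarrow> complex) \<Rightarrow> (nat \<Rightarrow> real^'r^'r)
   \<Rightarrow> nat \<Rightarrow> (nat \<Rightarrow> 'p \<Rightarrow> complex) \<Rightarrow> (nat \<Rightarrow> real^'ni^'r)
   \<Rightarrow> nat \<Rightarrow> (nat \<Rightarrow> 'p \<Rightarrow> complex) \<Rightarrow> (nat \<Rightarrow> real^'r^'no) \<Rightarrow> ennreal" where
  "Jerr \<mu> y qA \<alpha> A qB \<beta> B qC \<gamma> C =
     (\<integral>\<^sup>+ p. ennreal ((fro_norm (y p - yhat qA \<alpha> A qB \<beta> B qC \<gamma> C p))\<^sup>2) \<partial>\<mu>)"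

end

theory Submission
  imports Defs
begin

text \<open>Perturb one coefficient matrix of the optimal model, \<open>C\<^sub>k\<close>, \<open>B\<^sub>j\<close> or \<open>A\<^sub>i\<close>, by \<open>t E\<close>
  with \<open>E\<close> real. The residual \<open>y - yhat\<close> changes by \<open>t D + O(t\<^sup>2)\<close> with \<open>D = \<gamma>\<^sub>k E xhat\<close>,
  \<open>\<beta>\<^sub>j C A\<^sup>-\<^sup>1 E\<close> or \<open>\<alpha>\<^sub>i C A\<^sup>-\<^sup>1 E xhat\<close>, and the essential bound on \<open>\<alpha>\<^sub>i A\<^sup>-\<^sup>1\<close> together with the
  square integrability of \<open>\<Sum>|\<beta>\<^sub>j| \<Sum>|\<gamma>\<^sub>k| / \<Sum>|\<alpha>\<^sub>i|\<close> dominates all these terms in \<open>L\<^sub>2\<close>.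
  Minimality of \<open>J\<close> at \<open>t = 0\<close> then forces \<open>\<integral> Re \<langle>y - yhat, D\<rangle> = 0\<close> for every \<open>E\<close>: writing
  \<open>D = g U E V\<close>, the real part of every entry of the moment \<open>\<integral> g\<^sup>* U\<^sup>* (y - yhat) V\<^sup>*\<close> vanishes.
  Conjugation symmetry of \<open>\<mu>\<close> and of all data makes this moment real, hence zero; since
  \<open>xdual = (C A\<^sup>-\<^sup>1)\<^sup>*\<close>, these are the three identities.\<close>

section \<open>Frobenius norm of matrices\<close>

lemma power2_norm_matrix:
  "(norm (M::'a::real_normed_vector^'n^'m))\<^sup>2 = (\<Sum>a\<in>UNIV. \<Sum>b\<in>UNIV. (norm (M $ a $ b))\<^sup>2)"
  unfolding norm_vec_def L2_set_def by (simp add: sum_nonneg)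

lemma power2_norm_vector: "(norm (v::'a::real_normed_vector^'n))\<^sup>2 = (\<Sum>b\<in>UNIV. (norm (v $ b))\<^sup>2)"
  unfolding norm_vec_def L2_set_def by (simp add: sum_nonneg)

lemma fro_norm_eq_norm: "fro_norm M = norm M"
  unfolding fro_norm_def power2_norm_matrix[symmetric] by simp

lemma power2_norm_sum_mult_le:
  fixes x y :: "'b \<Rightarrow> 'a::real_normed_div_algebra"
  shows "(norm (\<Sum>b\<in>S. x b * y b))\<^sup>2 \<le> (\<Sum>b\<in>S. (norm (x b))\<^sup>2) * (\<Sum>b\<in>S. (norm (y b))\<^sup>2)"
proof -
  have "norm (\<Sum>b\<in>S. x b * y b) \<le> (\<Sum>b\<in>S. norm (x b) * norm (y b))"
    by (rule order_trans[OF norm_sum]) (simp add: norm_mult)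
  then have "(norm (\<Sum>b\<in>S. x b * y b))\<^sup>2 \<le> (\<Sum>b\<in>S. norm (x b) * norm (y b))\<^sup>2"
    by (simp add: power_mono)
  also have "\<dots> \<le> (\<Sum>b\<in>S. (norm (x b))\<^sup>2) * (\<Sum>b\<in>S. (norm (y b))\<^sup>2)"
    by (rule Cauchy_Schwarz_ineq_sum)
  finally show ?thesis .
qed

lemma norm_matrix_mult_le:
  fixes A :: "'a::real_normed_div_algebra^'n^'m" and B :: "'a^'p^'n"
  shows "norm (A ** B) \<le> norm A * norm B"
proof -
  have "(norm (A ** B))\<^sup>2 = (\<Sum>a\<in>UNIV. \<Sum>c\<in>UNIV. (norm (\<Sum>b\<in>UNIV. A$a$b * B$b$c))\<^sup>2)"
    by (simp add: power2_norm_matrix matrix_matrix_mult_def)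
  also have "\<dots> \<le> (\<Sum>a\<in>UNIV. \<Sum>c\<in>UNIV. (\<Sum>b\<in>UNIV. (norm (A$a$b))\<^sup>2) * (\<Sum>b\<in>UNIV. (norm (B$b$c))\<^sup>2))"
    by (intro sum_mono power2_norm_sum_mult_le)
  also have "\<dots> = (\<Sum>a\<in>UNIV. \<Sum>b\<in>UNIV. (norm (A$a$b))\<^sup>2) * (\<Sum>c\<in>UNIV. \<Sum>b\<in>UNIV. (norm (B$b$c))\<^sup>2)"
    by (simp add: sum_product)
  also have "\<dots> = (norm A * norm B)\<^sup>2"
    by (simp only: power2_norm_matrix power_mult_distrib sum.swap[of _ "UNIV::'p set"])
  finally show ?thesis
    by (rule power2_le_imp_le) simp
qed

lemma norm_matrix_mult3_le:
  fixes X :: "'a::real_normed_div_algebra^'n^'m" and Y :: "'a^'p^'n" and Z :: "'a^'q^'p"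
  shows "norm (X ** Y ** Z) \<le> norm X * norm Y * norm Z"
  by (meson norm_matrix_mult_le order_trans mult_right_mono norm_ge_zero)

lemma norm_matrix_vector_mult_le:
  fixes A :: "'a::real_normed_div_algebra^'n^'m"
  shows "norm (A *v v) \<le> norm A * norm v"
proof -
  have "(norm (A *v v))\<^sup>2 = (\<Sum>a\<in>UNIV. (norm (\<Sum>b\<in>UNIV. A$a$b * v$b))\<^sup>2)"
    by (simp add: power2_norm_vector matrix_vector_mult_def)
  also have "\<dots> \<le> (\<Sum>a\<in>UNIV. (\<Sum>b\<in>UNIV. (norm (A$a$b))\<^sup>2) * (\<Sum>b\<in>UNIV. (norm (v$b))\<^sup>2))"
    by (intro sum_mono power2_norm_sum_mult_le)
  also have "\<dots> = (norm A * norm v)\<^sup>2"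
    by (simp add: power2_norm_matrix power2_norm_vector sum_distrib_right power_mult_distrib)
  finally show ?thesis
    by (rule power2_le_imp_le) simp
qed

section \<open>Scaling, conjugation and adjoints of complex matrices\<close>

lemma cscale_nth [simp]: "cscale c M $ a $ b = c * M $ a $ b"
  by (simp add: cscale_def)

lemma cmat_nth [simp]: "cmat E $ a $ b = complex_of_real (E $ a $ b)"
  by (simp add: cmat_def)

lemma mconj_nth [simp]: "mconj M $ a $ b = cnj (M $ a $ b)"
  by (simp add: mconj_def)

lemma mstar_nth [simp]: "mstar M $ a $ b = cnj (M $ b $ a)"
  by (simp add: mstar_def transpose_def)

lemma vconj_nth [simp]: "vconj p $ a = cnj (p $ a)"
  by (simp add: vconj_def)

lemma vconj_vconj [simp]: "vconj (vconj p) = p"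
  by (simp add: vec_eq_iff)

lemma norm_cscale: "norm (cscale c M) = cmod c * norm M"
proof -
  have "(norm (cscale c M))\<^sup>2 = (cmod c * norm M)\<^sup>2"
    by (simp add: power2_norm_matrix power_mult_distrib norm_mult sum_distrib_left)
  then show ?thesis
    by (simp add: power2_eq_iff_nonneg)
qed

lemma norm_mstar: "norm (mstar M) = norm M"
proof -
  have "(norm (mstar M))\<^sup>2 = (norm M)\<^sup>2"
    unfolding power2_norm_matrix by (simp, rule sum.swap)
  then show ?thesis
    by (simp add: power2_eq_iff_nonneg)
qed

lemma norm_mconj: "norm (mconj M) = norm M"
  by (simp add: norm_vec_def L2_set_def)

lemma cscale_matrix_mult_left: "cscale c A ** B = cscale c (A ** B)"
  by (simp add: vec_eq_iff matrix_matrix_mult_def sum_distrib_left mult.assoc)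

lemma cscale_matrix_mult_right: "A ** cscale c B = cscale c (A ** B)"
  by (simp add: vec_eq_iff matrix_matrix_mult_def sum_distrib_left mult_ac)

lemma cscale_cscale: "cscale c (cscale d M) = cscale (c * d) M"
  by (simp add: vec_eq_iff mult.assoc)

lemma cscale_add: "cscale c (A + B) = cscale c A + cscale c B"
  by (simp add: vec_eq_iff algebra_simps)

lemma cscale_diff: "cscale c (A - B) = cscale c A - cscale c B"
  by (simp add: vec_eq_iff algebra_simps)

lemma cscale_scaleR: "cscale c (t *\<^sub>R M) = t *\<^sub>R cscale c M"
  by (simp add: vec_eq_iff scaleR_conv_of_real mult_ac)

lemma cscale_zero [simp]: "cscale 0 M = 0"
  by (simp add: vec_eq_iff)

lemma matrix_mult_scaleR_left: "(t *\<^sub>R A) ** B = t *\<^sub>R (A ** B)"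
  for A :: "'a::real_algebra_1^'n^'m"
  by (simp add: vec_eq_iff matrix_matrix_mult_def scaleR_sum_right)

lemma matrix_mult_scaleR_right: "A ** (t *\<^sub>R B) = t *\<^sub>R (A ** B)"
  for A :: "'a::real_algebra_1^'n^'m"
  by (simp add: vec_eq_iff matrix_matrix_mult_def scaleR_sum_right)

lemma matrix_add_rdistrib: "(A + B) ** C = A ** C + B ** C"
  by (simp add: vec_eq_iff matrix_matrix_mult_def algebra_simps sum.distrib)

lemma matrix_mult_diff_left: "(A - B) ** C = A ** C - B ** C"
  for A :: "'a::ring_1^'n^'m"
  by (simp add: vec_eq_iff matrix_matrix_mult_def algebra_simps sum_subtractf)

lemma matrix_mult_diff_right: "A ** (B - C) = A ** B - A ** C"
  for A :: "'a::ring_1^'n^'m"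
  by (simp add: vec_eq_iff matrix_matrix_mult_def algebra_simps sum_subtractf)

lemma mconj_matrix_mult: "mconj (A ** B) = mconj A ** mconj B"
  by (simp add: vec_eq_iff matrix_matrix_mult_def)

lemma mstar_matrix_mult: "mstar (A ** B) = mstar B ** mstar A"
  by (simp add: vec_eq_iff matrix_matrix_mult_def mult.commute)

lemma mconj_mstar: "mconj (mstar M) = mstar (mconj M)"
  by (simp add: vec_eq_iff)

lemma mconj_mconj [simp]: "mconj (mconj M) = M"
  by (simp add: vec_eq_iff)

lemma mconj_diff: "mconj (A - B) = mconj A - mconj B"
  by (simp add: vec_eq_iff)

lemma mconj_cscale: "mconj (cscale c A) = cscale (cnj c) (mconj A)"
  by (simp add: vec_eq_iff)

lemma mconj_cmat [simp]: "mconj (cmat E) = cmat E"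
  by (simp add: vec_eq_iff)

lemma cmat_add: "cmat (X + Y) = cmat X + cmat Y"
  by (simp add: vec_eq_iff)

lemma cmat_scaleR: "cmat (t *\<^sub>R X) = t *\<^sub>R cmat X"
  by (simp add: vec_eq_iff) (simp add: scaleR_conv_of_real)

lemma mstar_mat1 [simp]: "mstar (mat 1) = mat 1"
  by (simp add: vec_eq_iff mat_def)

lemma mconj_mat1 [simp]: "mconj (mat 1) = mat 1"
  by (simp add: vec_eq_iff mat_def)

lemma mconj_sum: "mconj (\<Sum>i\<in>S. f i) = (\<Sum>i\<in>S. mconj (f i))"
  by (induction S rule: infinite_finite_induct) (auto simp: vec_eq_iff)

lemma bounded_linear_mconj: "bounded_linear mconj"
proof (rule bounded_linear_intro[where K = 1])
  show "mconj (M + N) = mconj M + mconj N" for M N :: "complex^'n^'m"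
    by (simp add: vec_eq_iff)
  show "mconj (t *\<^sub>R M) = t *\<^sub>R mconj M" for t and M :: "complex^'n^'m"
    by (simp only: vec_eq_iff mconj_nth vector_scaleR_component complex_cnj_scaleR simp_thms)
qed (simp add: norm_mconj)

section \<open>Inverses and their perturbations\<close>

lemma matrix_inv_right: "invertible A \<Longrightarrow> A ** matrix_inv A = mat 1"
  and matrix_inv_left: "invertible A \<Longrightarrow> matrix_inv A ** A = mat 1"
  unfolding invertible_def matrix_inv_def by (metis (mono_tags, lifting) someI_ex)+

lemma matrix_inv_unique:
  fixes A :: "'a::semiring_1^'n^'m"
  assumes "A ** B = mat 1" "B ** A = mat 1"
  shows "matrix_inv A = B"
proof -
  have "invertible A"
    using assms invertible_def by blast
  then have "matrix_inv A = matrix_inv A ** (A ** B)"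
    by (simp add: assms)
  also have "\<dots> = B"
    by (simp add: matrix_mul_assoc matrix_inv_left \<open>invertible A\<close>)
  finally show ?thesis .
qed

lemma matrix_inv_not_invertible:
  "\<not> invertible A \<Longrightarrow> \<not> invertible B \<Longrightarrow> matrix_inv A = matrix_inv B"
  unfolding invertible_def matrix_inv_def by metis

lemma not_invertible_zero: "\<not> invertible (0 :: 'a::semiring_1^'n^'n)"
proof
  assume "invertible (0 :: 'a^'n^'n)"
  then have "(mat 1 :: 'a^'n^'n) $ i $ i = 0" for i
    by (auto simp: invertible_def)
  then show False
    by (simp add: mat_def)
qed

lemma matrix_inv_mstar:
  fixes A :: "complex^'n^'n"
  assumes "invertible A"
  shows "matrix_inv (mstar A) = mstar (matrix_inv A)"
  by (rule matrix_inv_unique)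
    (metis assms matrix_inv_left matrix_inv_right mstar_mat1 mstar_matrix_mult)+

lemma matrix_inv_mconj:
  fixes A :: "complex^'n^'n"
  assumes "invertible A"
  shows "matrix_inv (mconj A) = mconj (matrix_inv A)"
  by (rule matrix_inv_unique)
    (metis assms matrix_inv_left matrix_inv_right mconj_mat1 mconj_matrix_mult)+

lemma matrix_inv_cramer:
  fixes A :: "'a::field^'n^'n"
  assumes "invertible A"
  shows "matrix_inv A $ k $ j = det (\<chi> i l. if l = k then mat 1 $ i $ j else A $ i $ l) / det A"
proof -
  have "A *v column j (matrix_inv A) = column j (mat 1)"
    by (simp add: vec_eq_iff matrix_vector_mult_def column_def matrix_inv_right[OF assms, symmetric]
        matrix_matrix_mult_def)
  then have "column j (matrix_inv A) = (\<chi> k. det (\<chi> i l. if l = k then column j (mat 1) $ i else A $ i $ l) / det A)"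
    using cramer assms invertible_det_nz by blast
  then have "column j (matrix_inv A) $ k = det (\<chi> i l. if l = k then column j (mat 1) $ i else A $ i $ l) / det A"
    by simp
  moreover have "column j M $ i = M $ i $ j" for M :: "'a^'n^'n" and i
    by (simp add: column_def)
  ultimately show ?thesis
    by (simp only:)
qed

lemma invertible_mat1_add:
  fixes X :: "'a::real_normed_field^'n^'n"
  assumes "norm X < 1"
  shows "invertible (mat 1 + X)"
proof -
  have "inj ((*v) (mat 1 + X))"
  proof (rule injI)
    fix v w :: "'a^'n"
    assume "(mat 1 + X) *v v = (mat 1 + X) *v w"
    then have "v - w = - (X *v (v - w))"
      by (simp add: matrix_vector_mult_diff_distrib matrix_vector_mult_add_rdistrib algebra_simps)
    then have "norm (v - w) \<le> norm X * norm (v - w)"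
      by (metis norm_minus_cancel norm_matrix_vector_mult_le)
    with assms have "norm (v - w) = 0"
      by (metis mult_le_cancel_right1 norm_ge_zero not_le order_antisym)
    then show "v = w" by simp
  qed
  then have "det (mat 1 + X) \<noteq> 0"
    using det_nz_iff_inj_gen[OF matrix_vector_mul_linear_gen, of "mat 1 + X"] by simp
  then show ?thesis
    by (simp add: invertible_det_nz)
qed

lemma
  fixes A F :: "'a::comm_ring_1^'n^'n"
  assumes A: "invertible A" and AF: "invertible (A + F)"
  shows matrix_inv_add_left: "matrix_inv (A + F) = matrix_inv A - matrix_inv (A + F) ** F ** matrix_inv A"
    and matrix_inv_add_right: "matrix_inv (A + F) = matrix_inv A - matrix_inv A ** F ** matrix_inv (A + F)"
proof -
  have "matrix_inv (A + F) ** A = mat 1 - matrix_inv (A + F) ** F"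
    using matrix_inv_left[OF AF] by (simp add: matrix_add_ldistrib algebra_simps)
  then have "matrix_inv (A + F) ** A ** matrix_inv A = (mat 1 - matrix_inv (A + F) ** F) ** matrix_inv A"
    by simp
  then show "matrix_inv (A + F) = matrix_inv A - matrix_inv (A + F) ** F ** matrix_inv A"
    by (simp add: matrix_mul_assoc[symmetric] matrix_inv_right[OF A] matrix_mult_diff_left)
  have "A ** matrix_inv (A + F) = mat 1 - F ** matrix_inv (A + F)"
    using matrix_inv_right[OF AF] by (simp add: matrix_add_rdistrib algebra_simps)
  then have "matrix_inv A ** (A ** matrix_inv (A + F)) = matrix_inv A ** (mat 1 - F ** matrix_inv (A + F))"
    by simp
  then show "matrix_inv (A + F) = matrix_inv A - matrix_inv A ** F ** matrix_inv (A + F)"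
    by (simp add: matrix_mul_assoc matrix_inv_left[OF A] matrix_mult_diff_right)
qed

lemma matrix_inv_add_expansion:
  fixes A F :: "'a::comm_ring_1^'n^'n"
  assumes A: "invertible A" and AF: "invertible (A + F)"
  defines "Ai \<equiv> matrix_inv A" and "AFi \<equiv> matrix_inv (A + F)"
  shows "AFi = Ai - Ai ** F ** Ai + Ai ** F ** AFi ** F ** Ai"
proof -
  have right: "AFi = Ai - Ai ** F ** AFi"
    unfolding Ai_def AFi_def by (rule matrix_inv_add_right[OF A AF])
  have left: "AFi = Ai - AFi ** F ** Ai"
    unfolding Ai_def AFi_def by (rule matrix_inv_add_left[OF A AF])
  have "Ai ** F ** AFi = Ai ** F ** (Ai - AFi ** F ** Ai)"
    using left by (rule arg_cong)
  also have "\<dots> = Ai ** F ** Ai - Ai ** F ** AFi ** F ** Ai"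
    by (simp add: matrix_mult_diff_right matrix_mul_assoc)
  finally have middle: "Ai ** F ** AFi = Ai ** F ** Ai - Ai ** F ** AFi ** F ** Ai" .
  have "a = b - x \<Longrightarrow> x = z - w \<Longrightarrow> a = b - z + w" for a b x z w :: "'a^'n^'n"
    by simp
  from this[OF right middle] show ?thesis .
qed

lemma invertible_perturbation_bound:
  fixes A :: "complex^'n^'n" and E :: "complex^'n^'n"
  assumes A: "invertible A" and M: "norm (cscale a (matrix_inv A)) \<le> M"
    and t: "\<bar>t\<bar> * (M * norm E) \<le> 1/2"
  shows "invertible (A + t *\<^sub>R cscale a E)"
    and "norm (cscale a (matrix_inv (A + t *\<^sub>R cscale a E))) \<le> 2 * M"
proof -
  let ?F = "t *\<^sub>R cscale a E" and ?Ai = "cscale a (matrix_inv A)"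
  have "norm (matrix_inv A ** ?F) = \<bar>t\<bar> * norm (?Ai ** E)"
    by (simp add: matrix_mult_scaleR_right cscale_matrix_mult_left cscale_matrix_mult_right)
  also have "\<dots> \<le> \<bar>t\<bar> * (M * norm E)"
    by (intro mult_left_mono order_trans[OF norm_matrix_mult_le mult_right_mono[OF M]]) auto
  also have "\<dots> < 1" using t by simp
  finally have "invertible (mat 1 + matrix_inv A ** ?F)"
    by (rule invertible_mat1_add)
  moreover have "A ** (mat 1 + matrix_inv A ** ?F) = A + ?F"
    by (simp add: matrix_add_ldistrib matrix_mul_assoc matrix_inv_right[OF A])
  ultimately show AF: "invertible (A + ?F)"
    using invertible_mult[OF A] by metis
  define Z where "Z = cscale a (matrix_inv (A + ?F))"
  have "Z = cscale a (matrix_inv A - matrix_inv (A + ?F) ** ?F ** matrix_inv A)"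
    unfolding Z_def using matrix_inv_add_left[OF A AF] by (rule arg_cong)
  also have "\<dots> = ?Ai - t *\<^sub>R (Z ** E ** ?Ai)"
    by (simp add: Z_def cscale_diff cscale_scaleR cscale_cscale matrix_mult_scaleR_left
        matrix_mult_scaleR_right cscale_matrix_mult_left cscale_matrix_mult_right)
  finally have "norm Z = norm (?Ai - t *\<^sub>R (Z ** E ** ?Ai))"
    by (rule arg_cong)
  also have "\<dots> \<le> norm ?Ai + \<bar>t\<bar> * norm (Z ** E ** ?Ai)"
    using norm_triangle_ineq4[of ?Ai "t *\<^sub>R (Z ** E ** ?Ai)"] by simp
  also have "\<dots> \<le> M + \<bar>t\<bar> * (M * norm E) * norm Z"
  proof -
    have "norm (Z ** E ** ?Ai) \<le> norm Z * norm E * M"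
      using norm_matrix_mult3_le[of Z E ?Ai] M
      by (meson mult_left_mono order_trans mult_nonneg_nonneg norm_ge_zero)
    then have "\<bar>t\<bar> * norm (Z ** E ** ?Ai) \<le> \<bar>t\<bar> * (norm Z * norm E * M)"
      by (rule mult_left_mono) simp
    then show ?thesis
      using M by (simp add: mult_ac)
  qed
  also have "\<bar>t\<bar> * (M * norm E) * norm Z \<le> norm Z / 2"
    using mult_right_mono[OF t norm_ge_zero[of Z]] by simp
  finally show "norm Z \<le> 2 * M" by simp
qed

section \<open>Measurability of matrix-valued functions\<close>

lemma borel_measurable_vec_nth [measurable (raw)]:
  fixes f :: "'x \<Rightarrow> 'a::real_normed_vector^'n"
  assumes "f \<in> borel_measurable M"
  shows "(\<lambda>x. f x $ i) \<in> borel_measurable M"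
  using borel_measurable_continuous_on[OF continuous_on_component[OF continuous_on_id] assms] .

lemma borel_measurable_vecI:
  fixes f :: "'x \<Rightarrow> 'a::euclidean_space^'n"
  assumes "\<And>i. (\<lambda>x. f x $ i) \<in> borel_measurable M"
  shows "f \<in> borel_measurable M"
  unfolding borel_measurable_euclidean_space[where f = f]
proof
  fix b :: "'a^'n"
  assume "b \<in> Basis"
  then obtain i u where b: "b = axis i u" "u \<in> Basis"
    unfolding Basis_vec_def by auto
  have "(\<lambda>x. f x $ i \<bullet> u) \<in> borel_measurable M"
    using assms[of i] by measurable
  then show "(\<lambda>x. f x \<bullet> b) \<in> borel_measurable M"
    by (simp add: b inner_axis)
qed

lemma borel_measurable_matrixI:
  fixes f :: "'x \<Rightarrow> 'a::euclidean_space^'n^'m"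
  assumes "\<And>a b. (\<lambda>x. f x $ a $ b) \<in> borel_measurable M"
  shows "f \<in> borel_measurable M"
  by (intro borel_measurable_vecI assms)

lemma borel_measurable_cnj [measurable (raw)]:
  "f \<in> borel_measurable M \<Longrightarrow> (\<lambda>x. cnj (f x)) \<in> borel_measurable M"
  using borel_measurable_continuous_on[OF continuous_on_cnj[OF continuous_on_id]] .

lemma borel_measurable_matrix_mult [measurable (raw)]:
  fixes f :: "'x \<Rightarrow> complex^'n^'m" and g :: "'x \<Rightarrow> complex^'p^'n"
  assumes "f \<in> borel_measurable M" "g \<in> borel_measurable M"
  shows "(\<lambda>x. f x ** g x) \<in> borel_measurable M"
  unfolding matrix_matrix_mult_def by (intro borel_measurable_matrixI) (simp, use assms in measurable)

lemma borel_measurable_cscale [measurable (raw)]: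
  fixes f :: "'x \<Rightarrow> complex^'n^'m"
  assumes "c \<in> borel_measurable M" "f \<in> borel_measurable M"
  shows "(\<lambda>x. cscale (c x) (f x)) \<in> borel_measurable M"
  by (intro borel_measurable_matrixI) (simp, use assms in measurable)

lemma borel_measurable_mstar [measurable (raw)]:
  fixes f :: "'x \<Rightarrow> complex^'n^'m"
  assumes "f \<in> borel_measurable M"
  shows "(\<lambda>x. mstar (f x)) \<in> borel_measurable M"
  by (intro borel_measurable_matrixI) (simp, use assms in measurable)

lemma borel_measurable_mconj [measurable (raw)]:
  fixes f :: "'x \<Rightarrow> complex^'n^'m"
  assumes "f \<in> borel_measurable M"
  shows "(\<lambda>x. mconj (f x)) \<in> borel_measurable M"
  by (intro borel_measurable_matrixI) (simp, use assms in measurable)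

lemma borel_measurable_pmat:
  assumes "\<And>i. i < q \<Longrightarrow> f i \<in> borel_measurable M"
  shows "pmat q f N \<in> borel_measurable M"
  unfolding pmat_def using assms by (intro borel_measurable_sum borel_measurable_cscale) auto

lemma borel_measurable_det [measurable (raw)]:
  fixes f :: "'x \<Rightarrow> complex^'n^'n"
  assumes "f \<in> borel_measurable M"
  shows "(\<lambda>x. det (f x)) \<in> borel_measurable M"
  unfolding det_def using assms by measurable

text \<open>Off the invertible matrices, \<^const>\<open>matrix_inv\<close> is one fixed junk value, so Cramer's rule
  describes it everywhere up to a measurable case split.\<close>

lemma borel_measurable_matrix_inv [measurable (raw)]:
  fixes f :: "'x \<Rightarrow> complex^'n^'n"
  assumes f: "f \<in> borel_measurable M"
  shows "(\<lambda>x. matrix_inv (f x)) \<in> borel_measurable M"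
proof (intro borel_measurable_matrixI)
  fix k j
  let ?cramer = "\<lambda>x. det (\<chi> i l. if l = k then mat 1 $ i $ j else f x $ i $ l) / det (f x)"
  have "matrix_inv (f x) $ k $ j = (if det (f x) = 0 then matrix_inv (0::complex^'n^'n) $ k $ j
          else ?cramer x)" for x
  proof (cases "det (f x) = 0")
    case True
    then show ?thesis
      using matrix_inv_not_invertible not_invertible_zero invertible_det_nz by metis
  next
    case False
    then show ?thesis using matrix_inv_cramer[of "f x" k j] by (simp add: invertible_det_nz)
  qed
  moreover have "(\<lambda>x. det (\<chi> i l. if l = k then mat 1 $ i $ j else f x $ i $ l)) \<in> borel_measurable M"
  proof (intro borel_measurable_det borel_measurable_matrixI)
    fix a b
    show "(\<lambda>x. (\<chi> i l. if l = k then mat 1 $ i $ j else f x $ i $ l) $ a $ b) \<in> borel_measurable M"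
      using f by (cases "b = k") simp_all
  qed
  ultimately show "(\<lambda>x. matrix_inv (f x) $ k $ j) \<in> borel_measurable M"
    using f by simp
qed

lemma AE_le_esssup_real:
  fixes f :: "'a \<Rightarrow> real"
  assumes "esssup M (\<lambda>x. ereal (f x)) < \<infinity>"
  shows "AE x in M. f x \<le> max 0 (real_of_ereal (esssup M (\<lambda>x. ereal (f x))))"
  using esssup_AE[of "\<lambda>x. ereal (f x)" M]
proof eventually_elim
  case (elim x)
  with assms show ?case
    by (cases "esssup M (\<lambda>x. ereal (f x))") auto
qed

section \<open>Symmetric integrals and first variations in \<open>L\<^sub>2\<close>\<close>

lemma measure_preserving_involution:
  assumes inv: "\<And>x. \<sigma> (\<sigma> x) = x"
    and space: "\<And>x. x \<in> space M \<Longrightarrow> \<sigma> x \<in> space M"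
    and sets: "\<And>S. S \<in> sets M \<Longrightarrow> \<sigma> ` S \<in> sets M \<and> emeasure M (\<sigma> ` S) = emeasure M S"
  shows "\<sigma> \<in> measurable M M" and "distr M M \<sigma> = M"
proof -
  have vimage: "\<sigma> -` S \<inter> space M = \<sigma> ` S" if "S \<in> sets M" for S
    using sets.sets_into_space[OF that] space inv by (auto intro!: image_eqI[where f = \<sigma>])
  show \<sigma>: "\<sigma> \<in> measurable M M"
    using space sets vimage by (auto intro: measurableI)
  show "distr M M \<sigma> = M"
    by (rule measure_eqI) (simp_all add: emeasure_distr[OF \<sigma>] vimage sets)
qed

lemma mconj_integral_eq_if_symmetric:
  fixes W :: "'p \<Rightarrow> complex^'n^'m"
  assumes \<sigma> [measurable]: "\<sigma> \<in> measurable M M" and distr: "distr M M \<sigma> = M"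
    and W [measurable]: "W \<in> borel_measurable M" and sym: "AE x in M. W (\<sigma> x) = mconj (W x)"
  shows "mconj (integral\<^sup>L M W) = integral\<^sup>L M W"
proof -
  have "integral\<^sup>L M W = integral\<^sup>L (distr M M \<sigma>) W"
    using distr by simp
  also have "\<dots> = (\<integral>x. W (\<sigma> x) \<partial>M)"
    by (rule integral_distr[OF \<sigma> W])
  also have "\<dots> = (\<integral>x. mconj (W x) \<partial>M)"
  proof (rule integral_cong_AE)
    show "(\<lambda>x. W (\<sigma> x)) \<in> borel_measurable M" "(\<lambda>x. mconj (W x)) \<in> borel_measurable M"
      by measurable
  qed (fact sym)
  also have "\<dots> = mconj (integral\<^sup>L M W)"
    by (rule integral_bounded_linear'[OF bounded_linear_mconj bounded_linear_mconj]) simp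
  finally show ?thesis by simp
qed

lemma integral_matrix_eq_0I:
  fixes W :: "'p \<Rightarrow> complex^'n^'m"
  assumes W: "integrable M W" and real: "mconj (integral\<^sup>L M W) = integral\<^sup>L M W"
    and Re: "\<And>a c. (\<integral>x. Re (W x $ a $ c) \<partial>M) = 0"
  shows "integral\<^sup>L M W = 0"
proof (intro iffD2[OF vec_eq_iff] allI)
  fix a c
  have entry: "bounded_linear (\<lambda>X::complex^'n^'m. X $ a $ c)"
    by (rule bounded_linear_compose[OF bounded_linear_vec_nth bounded_linear_vec_nth])
  have "Re (integral\<^sup>L M W $ a $ c) = (\<integral>x. Re (W x $ a $ c) \<partial>M)"
    using integral_bounded_linear[OF bounded_linear_compose[OF bounded_linear_Re entry] W] by simp
  moreover have "cnj (integral\<^sup>L M W $ a $ c) = integral\<^sup>L M W $ a $ c"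
    using arg_cong[OF real, of "\<lambda>X. X $ a $ c"] by simp
  ultimately show "integral\<^sup>L M W $ a $ c = 0 $ a $ c"
    using Re by (simp add: complex_eq_iff complex_cnj_cancel_iff)
qed

lemma abs_mult_le_sum_squares: "\<bar>x * y\<bar> \<le> x\<^sup>2 + y\<^sup>2" for x y :: real
proof -
  have "2 * (\<bar>x\<bar> * \<bar>y\<bar>) \<le> x\<^sup>2 + y\<^sup>2"
    using sum_squares_bound[of "\<bar>x\<bar>" "\<bar>y\<bar>"] by (simp add: mult.assoc)
  moreover have "0 \<le> \<bar>x\<bar> * \<bar>y\<bar>"
    by simp
  ultimately show ?thesis
    unfolding abs_mult by linarith
qed

lemma integrable_power2_norm_if_le:
  fixes Z :: "'p \<Rightarrow> 'v::{banach, second_countable_topology}"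
  assumes Z: "Z \<in> borel_measurable M" and \<rho>: "integrable M (\<lambda>x. (\<rho> x)\<^sup>2)"
    and le: "AE x in M. norm (Z x) \<le> K * \<rho> x"
  shows "integrable M (\<lambda>x. (norm (Z x))\<^sup>2)"
proof (rule Bochner_Integration.integrable_bound)
  show "integrable M (\<lambda>x. K\<^sup>2 * (\<rho> x)\<^sup>2)"
    using \<rho> by simp
  show "AE x in M. norm ((norm (Z x))\<^sup>2) \<le> norm (K\<^sup>2 * (\<rho> x)\<^sup>2)"
    using le by eventually_elim (simp add: power_mult_distrib[symmetric] power_mono)
qed (use Z in measurable)

lemma integrable_if_norm_le_product:
  fixes F :: "'p \<Rightarrow> 'v::{banach, second_countable_topology}" and z :: "'p \<Rightarrow> 'w::real_normed_vector"
  assumes F: "F \<in> borel_measurable M" and \<rho>: "integrable M (\<lambda>x. (\<rho> x)\<^sup>2)"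
    and z: "integrable M (\<lambda>x. (norm (z x))\<^sup>2)"
    and le: "AE x in M. norm (F x) \<le> K * \<rho> x * norm (z x)"
  shows "integrable M F"
proof (rule Bochner_Integration.integrable_bound)
  show "integrable M (\<lambda>x. \<bar>K\<bar> * ((\<rho> x)\<^sup>2 + (norm (z x))\<^sup>2))"
    using \<rho> z by simp
  show "AE x in M. norm (F x) \<le> norm (\<bar>K\<bar> * ((\<rho> x)\<^sup>2 + (norm (z x))\<^sup>2))"
    using le
  proof eventually_elim
    case (elim x)
    have "K * \<rho> x * norm (z x) \<le> \<bar>K\<bar> * \<bar>\<rho> x * norm (z x)\<bar>"
      by (metis abs_ge_self abs_mult mult.assoc)
    also have "\<dots> \<le> \<bar>K\<bar> * ((\<rho> x)\<^sup>2 + (norm (z x))\<^sup>2)"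
      by (intro mult_left_mono abs_mult_le_sum_squares) simp
    finally show ?case
      using elim by simp
  qed
qed (rule F)

lemma linear_coeff_eq_0_if_local_min:
  fixes c \<kappa> d :: real
  assumes d: "d > 0" and min: "\<And>t. 0 < \<bar>t\<bar> \<Longrightarrow> \<bar>t\<bar> < d \<Longrightarrow> 0 \<le> 2 * t * c + t\<^sup>2 * \<kappa>"
  shows "c = 0"
proof (rule ccontr)
  assume c: "c \<noteq> 0"
  define s where "s = min (d / 2) (\<bar>c\<bar> / (\<bar>\<kappa>\<bar> + 1))"
  have s: "0 < s" "s < d"
    using d c by (auto simp: s_def)
  have "s \<le> \<bar>c\<bar> / (\<bar>\<kappa>\<bar> + 1)"
    unfolding s_def by (rule min.cobounded2)
  then have "s * (\<bar>\<kappa>\<bar> + 1) \<le> \<bar>c\<bar>"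
    using pos_le_divide_eq[of "\<bar>\<kappa>\<bar> + 1" s "\<bar>c\<bar>"] by linarith
  then have s\<kappa>: "s * \<kappa> < 2 * \<bar>c\<bar>"
    using c s by (smt (verit) abs_ge_self mult_left_mono)
  have "0 \<le> 2 * (- sgn c * s) * c + (- sgn c * s)\<^sup>2 * \<kappa>"
    using s c by (intro min) (simp_all add: abs_mult)
  also have "\<dots> = s * (s * \<kappa> - 2 * \<bar>c\<bar>)"
    using c by (simp add: power2_eq_square algebra_simps abs_sgn sgn_mult_abs)
  also have "\<dots> < 0"
    using s s\<kappa> by (simp add: mult_pos_neg)
  finally show False by simp
qed

lemma norm_second_order_perturbation_le:
  fixes r D Q :: "'v::real_inner"
  assumes t: "\<bar>t\<bar> \<le> 1" and Q: "norm Q \<le> G"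
  shows "(norm (r + t *\<^sub>R D + t\<^sup>2 *\<^sub>R Q))\<^sup>2
    \<le> (norm r)\<^sup>2 + 2 * t * inner r D + t\<^sup>2 * ((norm r)\<^sup>2 + 2 * (norm D)\<^sup>2 + 3 * G\<^sup>2)"
proof -
  have t2: "t\<^sup>2 \<le> 1"
    using t by (simp add: abs_square_le_1)
  have "(norm (r + t *\<^sub>R D + t\<^sup>2 *\<^sub>R Q))\<^sup>2
      = (norm r)\<^sup>2 + 2 * inner r (t *\<^sub>R D + t\<^sup>2 *\<^sub>R Q) + (norm (t *\<^sub>R D + t\<^sup>2 *\<^sub>R Q))\<^sup>2"
    unfolding add.assoc by (simp add: power2_norm_eq_inner inner_add inner_commute)
  also have "inner r (t *\<^sub>R D + t\<^sup>2 *\<^sub>R Q) = t * inner r D + t\<^sup>2 * inner r Q"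
    by (simp add: inner_add_right)
  also have "t\<^sup>2 * inner r Q \<le> t\<^sup>2 * ((norm r)\<^sup>2 + G\<^sup>2) / 2"
  proof -
    have "inner r Q \<le> norm r * G"
      using norm_cauchy_schwarz[of r Q] Q mult_left_mono[OF Q norm_ge_zero[of r]] by linarith
    also have "\<dots> \<le> ((norm r)\<^sup>2 + G\<^sup>2) / 2"
      using sum_squares_bound[of "norm r" G] by (simp add: power2_eq_square)
    finally have "inner r Q \<le> ((norm r)\<^sup>2 + G\<^sup>2) / 2" .
    from mult_left_mono[OF this zero_le_power2[of t]] show ?thesis
      by simp
  qed
  also have "(norm (t *\<^sub>R D + t\<^sup>2 *\<^sub>R Q))\<^sup>2 \<le> 2 * t\<^sup>2 * (norm D)\<^sup>2 + 2 * t\<^sup>2 * G\<^sup>2"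
  proof -
    have "norm (t *\<^sub>R D + t\<^sup>2 *\<^sub>R Q) \<le> \<bar>t\<bar> * norm D + t\<^sup>2 * G"
      using norm_triangle_ineq[of "t *\<^sub>R D" "t\<^sup>2 *\<^sub>R Q"] mult_left_mono[OF Q zero_le_power2[of t]]
      by simp
    then have "(norm (t *\<^sub>R D + t\<^sup>2 *\<^sub>R Q))\<^sup>2 \<le> (\<bar>t\<bar> * norm D + t\<^sup>2 * G)\<^sup>2"
      by (simp add: power_mono)
    also have "\<dots> \<le> 2 * (\<bar>t\<bar> * norm D)\<^sup>2 + 2 * (t\<^sup>2 * G)\<^sup>2"
      using sum_squares_bound[of "\<bar>t\<bar> * norm D" "t\<^sup>2 * G"] by (simp add: power2_eq_square algebra_simps)
    also have "(t\<^sup>2 * G)\<^sup>2 \<le> t\<^sup>2 * G\<^sup>2"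
    proof -
      have "t\<^sup>2 * (t\<^sup>2 * G\<^sup>2) \<le> t\<^sup>2 * G\<^sup>2"
        by (rule mult_left_le_one_le) (simp_all add: t2)
      then show ?thesis
        by (simp add: power_mult_distrib power2_eq_square mult_ac)
    qed
    finally show ?thesis
      by (simp add: power_mult_distrib)
  qed
  finally show ?thesis
    by (simp add: algebra_simps add_divide_distrib)
qed

lemma integral_inner_eq_0_if_local_min:
  fixes r D :: "'p \<Rightarrow> 'v::euclidean_space" and G :: "'p \<Rightarrow> real"
  assumes r: "r \<in> borel_measurable M" and D: "D \<in> borel_measurable M"
    and r2: "integrable M (\<lambda>x. (norm (r x))\<^sup>2)" and D2: "integrable M (\<lambda>x. (norm (D x))\<^sup>2)"
    and G2: "integrable M (\<lambda>x. (G x)\<^sup>2)" and \<delta>: "\<delta> > 0"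
    and min: "\<And>t. 0 < \<bar>t\<bar> \<Longrightarrow> \<bar>t\<bar> < \<delta> \<Longrightarrow> \<exists>Q. (AE x in M. norm (Q x) \<le> G x) \<and>
       (\<integral>\<^sup>+x. (norm (r x))\<^sup>2 \<partial>M) \<le> (\<integral>\<^sup>+x. (norm (r x + t *\<^sub>R D x + t\<^sup>2 *\<^sub>R Q x))\<^sup>2 \<partial>M)"
  shows "(\<integral>x. inner (r x) (D x) \<partial>M) = 0"
proof (rule linear_coeff_eq_0_if_local_min)
  define K where "K x = (norm (r x))\<^sup>2 + 2 * (norm (D x))\<^sup>2 + 3 * (G x)\<^sup>2" for x
  have rD: "integrable M (\<lambda>x. inner (r x) (D x))"
  proof (rule Bochner_Integration.integrable_bound)
    show "integrable M (\<lambda>x. (norm (r x))\<^sup>2 + (norm (D x))\<^sup>2)"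
      using r2 D2 by simp
    show "AE x in M. norm (inner (r x) (D x)) \<le> norm ((norm (r x))\<^sup>2 + (norm (D x))\<^sup>2)"
    proof (intro AE_I2)
      fix x
      show "norm (inner (r x) (D x)) \<le> norm ((norm (r x))\<^sup>2 + (norm (D x))\<^sup>2)"
        using Cauchy_Schwarz_ineq2[of "r x" "D x"] abs_mult_le_sum_squares[of "norm (r x)" "norm (D x)"]
        by simp
    qed
  qed (use r D in measurable)
  show "0 < min \<delta> 1"
    using \<delta> by simp
  fix t :: real
  assume t: "0 < \<bar>t\<bar>" "\<bar>t\<bar> < min \<delta> 1"
  obtain Q where Q: "AE x in M. norm (Q x) \<le> G x"
    and le: "(\<integral>\<^sup>+x. (norm (r x))\<^sup>2 \<partial>M) \<le> (\<integral>\<^sup>+x. (norm (r x + t *\<^sub>R D x + t\<^sup>2 *\<^sub>R Q x))\<^sup>2 \<partial>M)"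
    using min t by auto
  define h where "h x = (norm (r x))\<^sup>2 + 2 * t * inner (r x) (D x) + t\<^sup>2 * K x" for x
  have h: "integrable M h"
    unfolding h_def K_def using r2 D2 G2 rD by simp
  have hb: "AE x in M. (norm (r x + t *\<^sub>R D x + t\<^sup>2 *\<^sub>R Q x))\<^sup>2 \<le> h x"
    using Q by eventually_elim (use t in \<open>auto simp: h_def K_def intro: norm_second_order_perturbation_le\<close>)
  then have h0: "AE x in M. 0 \<le> h x"
    by eventually_elim (auto intro: order_trans[OF zero_le_power2])
  have "ennreal (\<integral>x. (norm (r x))\<^sup>2 \<partial>M) = (\<integral>\<^sup>+x. (norm (r x))\<^sup>2 \<partial>M)"
    by (rule nn_integral_eq_integral[OF r2, symmetric]) auto
  also note le
  also have "(\<integral>\<^sup>+x. (norm (r x + t *\<^sub>R D x + t\<^sup>2 *\<^sub>R Q x))\<^sup>2 \<partial>M) \<le> (\<integral>\<^sup>+x. h x \<partial>M)"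
    using hb by (intro nn_integral_mono_AE) (auto elim: AE_mp intro: ennreal_leI)
  also have "\<dots> = ennreal (integral\<^sup>L M h)"
    by (rule nn_integral_eq_integral[OF h h0])
  finally have "(\<integral>x. (norm (r x))\<^sup>2 \<partial>M) \<le> integral\<^sup>L M h"
    using integral_nonneg_AE[OF h0] by (auto simp add: ennreal_le_iff2)
  also have "integral\<^sup>L M h = (\<integral>x. (norm (r x))\<^sup>2 \<partial>M) + 2 * t * (\<integral>x. inner (r x) (D x) \<partial>M)
      + t\<^sup>2 * integral\<^sup>L M K"
    unfolding h_def K_def using r2 D2 G2 rD by simp
  finally show "0 \<le> 2 * t * (\<integral>x. inner (r x) (D x) \<partial>M) + t\<^sup>2 * integral\<^sup>L M K"
    by simp
qed

section \<open>Affine parameter dependence\<close>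

lemma norm_pmat_le: "norm (pmat q f M p) \<le> (\<Sum>i<q. norm (cmat (M i))) * (\<Sum>i<q. cmod (f i p))"
proof -
  have "norm (pmat q f M p) \<le> (\<Sum>i<q. cmod (f i p) * norm (cmat (M i)))"
    unfolding pmat_def by (rule order_trans[OF norm_sum]) (simp add: norm_cscale)
  also have "\<dots> \<le> (\<Sum>i<q. cmod (f i p) * (\<Sum>i<q. norm (cmat (M i))))"
    by (intro sum_mono mult_left_mono member_le_sum) auto
  finally show ?thesis
    by (simp add: sum_distrib_right mult.commute)
qed

lemma pmat_fun_upd:
  assumes "k < q"
  shows "pmat q f (M(k := M k + N)) p = pmat q f M p + cscale (f k p) (cmat N)"
proof -
  have "pmat q f (M(k := M k + N)) p = (\<Sum>i<q. cscale (f i p) (cmat (M i)) + (if i = k then cscale (f k p) (cmat N) else 0))"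
    unfolding pmat_def by (intro sum.cong) (auto simp: cmat_add cscale_add)
  then show ?thesis
    using assms by (simp add: sum.distrib pmat_def)
qed

lemma pmat_vconj:
  assumes "\<And>i. i < q \<Longrightarrow> f i (vconj p) = cnj (f i p)"
  shows "pmat q f M (vconj p) = mconj (pmat q f M p)"
  unfolding pmat_def mconj_sum by (intro sum.cong) (simp_all add: assms mconj_cscale)

lemma inner_cscale_matrix_unit:
  fixes R :: "complex^'n^'m" and U :: "complex^'s^'m" and V :: "complex^'n^'t"
  shows "inner R (cscale g (U ** cmat (axis a (axis c 1)) ** V))
    = Re ((cscale (cnj g) (mstar U ** R ** mstar V)) $ a $ c)"
proof -
  have row: "(U ** cmat (axis a w)) $ x $ u = U $ x $ a * complex_of_real (w $ u)" for x u and w :: "real^'t"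
    unfolding matrix_matrix_mult_def by (simp add: axis_def if_distrib if_distribR sum.delta cong: if_cong)
  have unit: "(U ** cmat (axis a (axis c 1)) ** V) $ x $ z = U $ x $ a * V $ c $ z" for x z
    unfolding matrix_matrix_mult_def[of "U ** _"] row
    by (simp add: axis_def if_distrib if_distribR sum.delta cong: if_cong)
  have "inner R (cscale g (U ** cmat (axis a (axis c 1)) ** V))
      = Re (\<Sum>x\<in>UNIV. \<Sum>z\<in>UNIV. R $ x $ z * cnj (g * (U $ x $ a * V $ c $ z)))"
    by (simp add: inner_vec_def inner_complex_def unit Re_sum algebra_simps)
  also have "(\<Sum>x\<in>UNIV. \<Sum>z\<in>UNIV. R $ x $ z * cnj (g * (U $ x $ a * V $ c $ z)))
      = (\<Sum>z\<in>UNIV. \<Sum>x\<in>UNIV. R $ x $ z * cnj (g * (U $ x $ a * V $ c $ z)))"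
    by (rule sum.swap)
  also have "\<dots> = (cscale (cnj g) (mstar U ** R ** mstar V)) $ a $ c"
    by (simp add: matrix_matrix_mult_def sum_distrib_left sum_distrib_right mult_ac)
  finally show ?thesis .
qed

lemma transfer_perturbation_expansion:
  fixes A F :: "complex^'r^'r" and Cm :: "complex^'r^'m" and Bm :: "complex^'n^'r"
  assumes A: "invertible A" and AF: "invertible (A + t *\<^sub>R F)"
  shows "Cm ** matrix_inv (A + t *\<^sub>R F) ** Bm = Cm ** matrix_inv A ** Bm
      - t *\<^sub>R (Cm ** matrix_inv A ** F ** matrix_inv A ** Bm)
      + t\<^sup>2 *\<^sub>R (Cm ** matrix_inv A ** (F ** matrix_inv (A + t *\<^sub>R F) ** F) ** matrix_inv A ** Bm)"
  using arg_cong[OF matrix_inv_add_expansion[OF A AF], of "\<lambda>X. Cm ** X ** Bm"]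
  by (simp add: matrix_add_rdistrib matrix_add_ldistrib matrix_mult_diff_left matrix_mult_diff_right
      matrix_mult_scaleR_left matrix_mult_scaleR_right matrix_mul_assoc power2_eq_square)

section \<open>The \<open>L\<^sub>2\<close>-optimal reduced model\<close>

locale l2_optimal_rom =
  fixes P :: "(complex^'np) set"
    and \<mu> :: "(complex^'np) measure"
    and y :: "complex^'np \<Rightarrow> complex^'ni^'no"
    and qA qB qC :: nat
    and \<alpha> \<beta> \<gamma> :: "nat \<Rightarrow> complex^'np \<Rightarrow> complex"
    and A :: "nat \<Rightarrow> real^'r^'r"
    and B :: "nat \<Rightarrow> real^'ni^'r"
    and C :: "nat \<Rightarrow> real^'r^'no"
  assumes P_conj: "\<forall>p\<in>P. vconj p \<in> P"
    and space_mu: "space \<mu> = P"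
    and mu_conj: "\<forall>S\<in>sets \<mu>. vconj ` S \<in> sets \<mu> \<and> emeasure \<mu> (vconj ` S) = emeasure \<mu> S"
    and y_meas: "y \<in> borel_measurable \<mu>"
    and y_conj: "\<forall>p\<in>P. mconj (y p) = y (vconj p)"
    and y_L2: "(\<integral>\<^sup>+ p. ennreal ((fro_norm (y p))\<^sup>2) \<partial>\<mu>) < \<infinity>"
    and \<alpha>_meas: "\<forall>i<qA. \<alpha> i \<in> borel_measurable \<mu>"
    and \<beta>_meas: "\<forall>j<qB. \<beta> j \<in> borel_measurable \<mu>"
    and \<gamma>_meas: "\<forall>k<qC. \<gamma> k \<in> borel_measurable \<mu>"
    and \<alpha>_conj: "\<forall>i<qA. \<forall>p\<in>P. cnj (\<alpha> i p) = \<alpha> i (vconj p)"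
    and \<beta>_conj: "\<forall>j<qB. \<forall>p\<in>P. cnj (\<beta> j p) = \<beta> j (vconj p)"
    and \<gamma>_conj: "\<forall>k<qC. \<forall>p\<in>P. cnj (\<gamma> k p) = \<gamma> k (vconj p)"
    and ratio_L2: "(\<integral>\<^sup>+ p. (ennreal ((\<Sum>j<qB. cmod (\<beta> j p)) * (\<Sum>k<qC. cmod (\<gamma> k p)))
                          / ennreal (\<Sum>i<qA. cmod (\<alpha> i p)))\<^sup>2 \<partial>\<mu>) < \<infinity>"
    and A_inv_ae: "AE p in \<mu>. invertible (pmat qA \<alpha> A p)"
    and A_esssup: "\<forall>i<qA. esssup \<mu> (\<lambda>p. ereal (fro_norm (cscale (\<alpha> i p) (matrix_inv (pmat qA \<alpha> A p))))) < \<infinity>"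
    and optimal: "\<forall>(A'::nat \<Rightarrow> real^'r^'r) (B'::nat \<Rightarrow> real^'ni^'r) (C'::nat \<Rightarrow> real^'r^'no).
                    (AE p in \<mu>. invertible (pmat qA \<alpha> A' p)) \<longrightarrow>
                    Jerr \<mu> y qA \<alpha> A qB \<beta> B qC \<gamma> C \<le> Jerr \<mu> y qA \<alpha> A' qB \<beta> B' qC \<gamma> C'"
begin

abbreviation "Ahat \<equiv> pmat qA \<alpha> A"
abbreviation "Bhat \<equiv> pmat qB \<beta> B"
abbreviation "Chat \<equiv> pmat qC \<gamma> C"
abbreviation "xh \<equiv> xhat qA \<alpha> A qB \<beta> B"
abbreviation "yh \<equiv> yhat qA \<alpha> A qB \<beta> B qC \<gamma> C"
abbreviation "xd \<equiv> xdual qA \<alpha> A qC \<gamma> C"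
abbreviation "res p \<equiv> y p - yh p"
abbreviation "CAinv p \<equiv> Chat p ** matrix_inv (Ahat p)"

abbreviation "s\<alpha> p \<equiv> \<Sum>i<qA. cmod (\<alpha> i p)"
abbreviation "s\<beta> p \<equiv> \<Sum>j<qB. cmod (\<beta> j p)"
abbreviation "s\<gamma> p \<equiv> \<Sum>k<qC. cmod (\<gamma> k p)"
abbreviation "\<rho> p \<equiv> s\<beta> p * s\<gamma> p / s\<alpha> p"

definition inv_bound :: real where
  "inv_bound = (\<Sum>i<qA. max 0 (real_of_ereal
     (esssup \<mu> (\<lambda>p. ereal (fro_norm (cscale (\<alpha> i p) (matrix_inv (Ahat p))))))))"

abbreviation "KA \<equiv> real qA * inv_bound"
abbreviation "KB \<equiv> \<Sum>j<qB. norm (cmat (B j))"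
abbreviation "KC \<equiv> \<Sum>k<qC. norm (cmat (C k))"

definition good :: "complex^'np \<Rightarrow> bool" where
  "good p \<longleftrightarrow> p \<in> P \<and> invertible (Ahat p) \<and>
     (\<forall>i<qA. norm (cscale (\<alpha> i p) (matrix_inv (Ahat p))) \<le> inv_bound)"

lemma inv_bound_nonneg: "0 \<le> inv_bound"
  unfolding inv_bound_def by (simp add: sum_nonneg)

lemma AE_good: "AE p in \<mu>. good p"
proof -
  have "AE p in \<mu>. \<forall>i\<in>{..<qA}. norm (cscale (\<alpha> i p) (matrix_inv (Ahat p))) \<le> inv_bound"
  proof (rule AE_finite_allI)
    fix i
    assume "i \<in> {..<qA}"
    then have i: "i < qA" by simp
    have M: "max 0 (real_of_ereal (esssup \<mu> (\<lambda>p. ereal (fro_norm (cscale (\<alpha> i p) (matrix_inv (Ahat p)))))))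
        \<le> inv_bound"
      unfolding inv_bound_def using i by (intro member_le_sum) auto
    from AE_le_esssup_real[OF A_esssup[rule_format, OF i]]
    show "AE p in \<mu>. norm (cscale (\<alpha> i p) (matrix_inv (Ahat p))) \<le> inv_bound"
    proof eventually_elim
      case (elim p)
      show ?case
        using order_trans[OF elim M] by (simp add: fro_norm_eq_norm)
    qed
  qed simp
  moreover have "AE p in \<mu>. p \<in> P"
    using AE_space[of \<mu>] unfolding space_mu .
  ultimately show ?thesis
    using A_inv_ae by eventually_elim (auto simp: good_def)
qed

lemma good_s\<alpha>_pos:
  assumes "good p"
  shows "0 < s\<alpha> p"
proof (rule ccontr)
  assume "\<not> 0 < s\<alpha> p"
  then have "s\<alpha> p = 0"
    by (metis (no_types) antisym not_less norm_ge_zero sum_nonneg)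
  then have "\<forall>i<qA. \<alpha> i p = 0"
    by (simp add: sum_nonneg_eq_0_iff)
  then have "Ahat p = 0"
    unfolding pmat_def by simp
  with assms show False
    by (simp add: good_def not_invertible_zero)
qed

lemma good_norm_inv_le:
  assumes "good p"
  shows "norm (matrix_inv (Ahat p)) \<le> KA / s\<alpha> p"
proof -
  have "s\<alpha> p * norm (matrix_inv (Ahat p)) = (\<Sum>i<qA. norm (cscale (\<alpha> i p) (matrix_inv (Ahat p))))"
    by (simp add: sum_distrib_right norm_cscale)
  also have "\<dots> \<le> KA"
    using assms sum_mono[of "{..<qA}" _ "\<lambda>_. inv_bound"] by (simp add: good_def)
  finally show ?thesis
    using good_s\<alpha>_pos[OF assms] by (simp add: pos_le_divide_eq mult.commute)
qed

lemma good_norm_xh_le: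
  assumes "good p"
  shows "norm (xh p) \<le> KA * KB * s\<beta> p / s\<alpha> p"
proof -
  have "norm (xh p) \<le> norm (matrix_inv (Ahat p)) * norm (Bhat p)"
    unfolding xhat_def by (rule norm_matrix_mult_le)
  also have "\<dots> \<le> KA / s\<alpha> p * (KB * s\<beta> p)"
    using good_norm_inv_le[OF assms] norm_pmat_le inv_bound_nonneg good_s\<alpha>_pos[OF assms]
    by (intro mult_mono) auto
  finally show ?thesis by simp
qed

lemma good_norm_CAinv_le:
  assumes "good p"
  shows "norm (CAinv p) \<le> KA * KC * s\<gamma> p / s\<alpha> p"
proof -
  have "norm (CAinv p) \<le> norm (Chat p) * norm (matrix_inv (Ahat p))"
    by (rule norm_matrix_mult_le)
  also have "\<dots> \<le> (KC * s\<gamma> p) * (KA / s\<alpha> p)"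
    using good_norm_inv_le[OF assms] norm_pmat_le by (intro mult_mono) (auto simp: sum_nonneg)
  finally show ?thesis by (simp add: mult_ac)
qed

lemma good_norm_yh_le:
  assumes "good p"
  shows "norm (yh p) \<le> KA * KB * KC * \<rho> p"
proof -
  have "norm (yh p) \<le> norm (Chat p) * norm (xh p)"
    unfolding yhat_def by (rule norm_matrix_mult_le)
  also have "\<dots> \<le> (KC * s\<gamma> p) * (KA * KB * s\<beta> p / s\<alpha> p)"
    using good_norm_xh_le[OF assms] norm_pmat_le by (intro mult_mono) (auto simp: sum_nonneg)
  finally show ?thesis by (simp add: mult_ac)
qed

lemma good_coeff_xh_le:
  assumes "good p" and "k < qC"
  shows "cmod (\<gamma> k p) * norm (xh p) \<le> KA * KB * \<rho> p"
proof -
  have "cmod (\<gamma> k p) * norm (xh p) \<le> s\<gamma> p * (KA * KB * s\<beta> p / s\<alpha> p)"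
    using assms good_norm_xh_le by (intro mult_mono member_le_sum) (auto simp: sum_nonneg)
  then show ?thesis
    by (simp add: mult_ac)
qed

lemma good_coeff_CAinv_le:
  assumes "good p" and "j < qB"
  shows "cmod (\<beta> j p) * norm (CAinv p) \<le> KA * KC * \<rho> p"
proof -
  have "cmod (\<beta> j p) * norm (CAinv p) \<le> s\<beta> p * (KA * KC * s\<gamma> p / s\<alpha> p)"
    using assms good_norm_CAinv_le by (intro mult_mono member_le_sum) (auto simp: sum_nonneg)
  then show ?thesis
    by (simp add: mult_ac)
qed

lemma good_coeff_CAinv_xh_le:
  assumes "good p" and "i < qA"
  shows "cmod (\<alpha> i p) * norm (CAinv p) * norm (xh p) \<le> KA\<^sup>2 * KB * KC * \<rho> p"
proof -
  have "cmod (\<alpha> i p) * norm (CAinv p) * norm (xh p)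
      \<le> s\<alpha> p * (KA * KC * s\<gamma> p / s\<alpha> p) * (KA * KB * s\<beta> p / s\<alpha> p)"
    using assms good_norm_CAinv_le good_norm_xh_le inv_bound_nonneg
    by (intro mult_mono member_le_sum) (auto simp: sum_nonneg)
  also have "\<dots> = KA\<^sup>2 * KB * KC * \<rho> p"
    using good_s\<alpha>_pos[OF assms(1)] by (simp add: power2_eq_square field_simps)
  finally show ?thesis .
qed

lemma
  assumes "good p"
  shows xh_vconj: "xh (vconj p) = mconj (xh p)"
    and res_vconj: "res (vconj p) = mconj (res p)"
    and CAinv_vconj: "CAinv (vconj p) = mconj (CAinv p)"
proof -
  have p: "p \<in> P" and inv: "invertible (Ahat p)"
    using assms by (auto simp: good_def)
  have hat: "Ahat (vconj p) = mconj (Ahat p)" "Bhat (vconj p) = mconj (Bhat p)"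
    "Chat (vconj p) = mconj (Chat p)"
    using \<alpha>_conj \<beta>_conj \<gamma>_conj p by (auto intro!: pmat_vconj)
  have "matrix_inv (Ahat (vconj p)) = mconj (matrix_inv (Ahat p))"
    unfolding hat by (rule matrix_inv_mconj[OF inv])
  then show "xh (vconj p) = mconj (xh p)" "res (vconj p) = mconj (res p)"
    "CAinv (vconj p) = mconj (CAinv p)"
    using y_conj p by (simp_all add: xhat_def yhat_def hat mconj_matrix_mult mconj_diff)
qed

lemma good_xd_eq: "good p \<Longrightarrow> xd p = mstar (CAinv p)"
  by (simp add: good_def xdual_def matrix_inv_mstar mstar_matrix_mult)

lemmas [measurable] = y_meas

lemma hat_measurable [measurable]:
  "Ahat \<in> borel_measurable \<mu>" "Bhat \<in> borel_measurable \<mu>" "Chat \<in> borel_measurable \<mu>"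
  using \<alpha>_meas \<beta>_meas \<gamma>_meas by (auto intro!: borel_measurable_pmat)

lemma reduced_measurable [measurable]:
  "xh \<in> borel_measurable \<mu>" "yh \<in> borel_measurable \<mu>" "xd \<in> borel_measurable \<mu>"
  unfolding xhat_def[abs_def] yhat_def[abs_def] xdual_def[abs_def]
  by (intro borel_measurable_matrix_mult borel_measurable_matrix_inv borel_measurable_mstar
      hat_measurable)+

lemma abs_sum_measurable [measurable]:
  "(\<lambda>p. s\<alpha> p) \<in> borel_measurable \<mu>" "(\<lambda>p. s\<beta> p) \<in> borel_measurable \<mu>"
  "(\<lambda>p. s\<gamma> p) \<in> borel_measurable \<mu>"
  using \<alpha>_meas \<beta>_meas \<gamma>_meas
  by (auto intro!: borel_measurable_sum measurable_compose[OF _ borel_measurable_norm])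

lemma
  shows vconj_measurable [measurable]: "vconj \<in> measurable \<mu> \<mu>"
    and distr_vconj: "distr \<mu> \<mu> vconj = \<mu>"
  using measure_preserving_involution[of vconj \<mu>] P_conj space_mu mu_conj by auto

lemma integrable_\<rho>2: "integrable \<mu> (\<lambda>p. (\<rho> p)\<^sup>2)"
proof (rule integrableI_nonneg)
  have "AE p in \<mu>. ennreal ((\<rho> p)\<^sup>2) = (ennreal (s\<beta> p * s\<gamma> p) / ennreal (s\<alpha> p))\<^sup>2"
    using AE_good
  proof eventually_elim
    case (elim p)
    then show ?case
      using good_s\<alpha>_pos[OF elim] by (simp add: divide_ennreal ennreal_power sum_nonneg)
  qed
  then have "(\<integral>\<^sup>+p. ennreal ((\<rho> p)\<^sup>2) \<partial>\<mu>)
      = (\<integral>\<^sup>+p. (ennreal (s\<beta> p * s\<gamma> p) / ennreal (s\<alpha> p))\<^sup>2 \<partial>\<mu>)"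
    by (rule nn_integral_cong_AE)
  then show "(\<integral>\<^sup>+p. ennreal ((\<rho> p)\<^sup>2) \<partial>\<mu>) < \<infinity>"
    using ratio_L2 by simp
qed auto

lemma integrable_y2: "integrable \<mu> (\<lambda>p. (norm (y p))\<^sup>2)"
  using y_L2 by (intro integrableI_nonneg) (auto simp: fro_norm_eq_norm)

lemma integrable_yh2: "integrable \<mu> (\<lambda>p. (norm (yh p))\<^sup>2)"
  using AE_good integrable_\<rho>2
  by (intro integrable_power2_norm_if_le[where K = "KA * KB * KC"]) (auto elim!: AE_mp intro: good_norm_yh_le)

lemma integrable_res2: "integrable \<mu> (\<lambda>p. (norm (res p))\<^sup>2)"
proof (rule Bochner_Integration.integrable_bound)
  show "integrable \<mu> (\<lambda>p. 2 * (norm (y p))\<^sup>2 + 2 * (norm (yh p))\<^sup>2)"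
    using integrable_y2 integrable_yh2 by simp
  show "AE p in \<mu>. norm ((norm (res p))\<^sup>2) \<le> norm (2 * (norm (y p))\<^sup>2 + 2 * (norm (yh p))\<^sup>2)"
  proof (rule AE_I2)
    fix p
    have "(norm (res p))\<^sup>2 \<le> (norm (y p) + norm (yh p))\<^sup>2"
      using norm_triangle_ineq4 by (intro power_mono) auto
    also have "\<dots> \<le> 2 * (norm (y p))\<^sup>2 + 2 * (norm (yh p))\<^sup>2"
      using sum_squares_bound[of "norm (y p)" "norm (yh p)"] by (simp add: power2_eq_square algebra_simps)
    finally show "norm ((norm (res p))\<^sup>2) \<le> norm (2 * (norm (y p))\<^sup>2 + 2 * (norm (yh p))\<^sup>2)"
      by simp
  qed
qed measurable

lemma stationary_direction:
  fixes D :: "complex^'np \<Rightarrow> complex^'ni^'no"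
  assumes D [measurable]: "D \<in> borel_measurable \<mu>" and D_le: "AE p in \<mu>. norm (D p) \<le> K * \<rho> p"
    and \<delta>: "\<delta> > 0"
    and perturb: "\<And>t. 0 < \<bar>t\<bar> \<Longrightarrow> \<bar>t\<bar> < \<delta> \<Longrightarrow>
      \<exists>(A'::nat \<Rightarrow> real^'r^'r) (B'::nat \<Rightarrow> real^'ni^'r) (C'::nat \<Rightarrow> real^'r^'no) Q.
      (AE p in \<mu>. invertible (pmat qA \<alpha> A' p)) \<and> (AE p in \<mu>. norm (Q p) \<le> K' * \<rho> p) \<and>
      (AE p in \<mu>. y p - yhat qA \<alpha> A' qB \<beta> B' qC \<gamma> C' p = res p + t *\<^sub>R D p + t\<^sup>2 *\<^sub>R Q p)"
  shows "(\<integral>p. inner (res p) (D p) \<partial>\<mu>) = 0"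
proof (rule integral_inner_eq_0_if_local_min[OF _ D integrable_res2 _ _ \<delta>])
  show "integrable \<mu> (\<lambda>p. (norm (D p))\<^sup>2)"
    using integrable_power2_norm_if_le[OF D integrable_\<rho>2 D_le] .
  show "integrable \<mu> (\<lambda>p. (K' * \<rho> p)\<^sup>2)"
    unfolding power_mult_distrib by (rule integrable_mult_right[OF integrable_\<rho>2])
  fix t :: real
  assume t: "0 < \<bar>t\<bar>" "\<bar>t\<bar> < \<delta>"
  obtain A' :: "nat \<Rightarrow> real^'r^'r" and B' :: "nat \<Rightarrow> real^'ni^'r" and C' :: "nat \<Rightarrow> real^'r^'no"
    and Q where inv: "AE p in \<mu>. invertible (pmat qA \<alpha> A' p)"
    and Q: "AE p in \<mu>. norm (Q p) \<le> K' * \<rho> p"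
    and res': "AE p in \<mu>. y p - yhat qA \<alpha> A' qB \<beta> B' qC \<gamma> C' p = res p + t *\<^sub>R D p + t\<^sup>2 *\<^sub>R Q p"
    using perturb[OF t] by blast
  have "(\<integral>\<^sup>+p. (norm (res p))\<^sup>2 \<partial>\<mu>) = Jerr \<mu> y qA \<alpha> A qB \<beta> B qC \<gamma> C"
    by (simp add: Jerr_def fro_norm_eq_norm)
  also have "\<dots> \<le> Jerr \<mu> y qA \<alpha> A' qB \<beta> B' qC \<gamma> C'"
    using optimal inv by blast
  also have "\<dots> = (\<integral>\<^sup>+p. (norm (res p + t *\<^sub>R D p + t\<^sup>2 *\<^sub>R Q p))\<^sup>2 \<partial>\<mu>)"
    unfolding Jerr_def fro_norm_eq_norm using res'
    by (intro nn_integral_cong_AE) (erule AE_mp, intro AE_I2 impI, simp only:)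
  finally show "\<exists>Q. (AE p in \<mu>. norm (Q p) \<le> K' * \<rho> p) \<and>
      (\<integral>\<^sup>+p. (norm (res p))\<^sup>2 \<partial>\<mu>) \<le> (\<integral>\<^sup>+p. (norm (res p + t *\<^sub>R D p + t\<^sup>2 *\<^sub>R Q p))\<^sup>2 \<partial>\<mu>)"
    using Q by blast
qed measurable

lemma stationary_C:
  assumes k: "k < qC"
  shows "(\<integral>p. inner (res p) (cscale (\<gamma> k p) (cmat E ** xh p)) \<partial>\<mu>) = 0"
proof (rule stationary_direction[where K = "norm (cmat E) * KA * KB" and K' = 0 and \<delta> = 1])
  have [measurable]: "\<gamma> k \<in> borel_measurable \<mu>"
    using \<gamma>_meas k by auto
  show "(\<lambda>p. cscale (\<gamma> k p) (cmat E ** xh p)) \<in> borel_measurable \<mu>"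
    by measurable
  show "AE p in \<mu>. norm (cscale (\<gamma> k p) (cmat E ** xh p)) \<le> norm (cmat E) * KA * KB * \<rho> p"
    using AE_good
  proof eventually_elim
    case (elim p)
    have "norm (cscale (\<gamma> k p) (cmat E ** xh p)) \<le> cmod (\<gamma> k p) * (norm (cmat E) * norm (xh p))"
      unfolding norm_cscale by (intro mult_left_mono norm_matrix_mult_le) simp
    also have "\<dots> \<le> norm (cmat E) * (KA * KB * \<rho> p)"
      using mult_left_mono[OF good_coeff_xh_le[OF elim k] norm_ge_zero[of "cmat E"]] by (simp add: mult_ac)
    finally show ?case
      by (simp add: mult_ac)
  qed
  fix t :: real
  let ?C' = "C(k := C k + (- t) *\<^sub>R E)"
  have "y p - yhat qA \<alpha> A qB \<beta> B qC \<gamma> ?C' p = res p + t *\<^sub>R cscale (\<gamma> k p) (cmat E ** xh p)" for p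
    unfolding yhat_def pmat_fun_upd[OF k] cmat_scaleR cscale_scaleR matrix_add_rdistrib
      matrix_mult_scaleR_left cscale_matrix_mult_left
    by (simp add: algebra_simps)
  then show "\<exists>(A'::nat \<Rightarrow> real^'r^'r) (B'::nat \<Rightarrow> real^'ni^'r) (C'::nat \<Rightarrow> real^'r^'no) Q.
      (AE p in \<mu>. invertible (pmat qA \<alpha> A' p)) \<and> (AE p in \<mu>. norm (Q p) \<le> 0 * \<rho> p) \<and>
      (AE p in \<mu>. y p - yhat qA \<alpha> A' qB \<beta> B' qC \<gamma> C' p
         = res p + t *\<^sub>R cscale (\<gamma> k p) (cmat E ** xh p) + t\<^sup>2 *\<^sub>R Q p)"
    using A_inv_ae by (intro exI[of _ A] exI[of _ B] exI[of _ ?C'] exI[of _ "\<lambda>_. 0"]) simp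
qed simp

lemma stationary_B:
  assumes j: "j < qB"
  shows "(\<integral>p. inner (res p) (cscale (\<beta> j p) (CAinv p ** cmat E)) \<partial>\<mu>) = 0"
proof (rule stationary_direction[where K = "norm (cmat E) * KA * KC" and K' = 0 and \<delta> = 1])
  have [measurable]: "\<beta> j \<in> borel_measurable \<mu>"
    using \<beta>_meas j by auto
  show "(\<lambda>p. cscale (\<beta> j p) (CAinv p ** cmat E)) \<in> borel_measurable \<mu>"
    by measurable
  show "AE p in \<mu>. norm (cscale (\<beta> j p) (CAinv p ** cmat E)) \<le> norm (cmat E) * KA * KC * \<rho> p"
    using AE_good
  proof eventually_elim
    case (elim p)
    have "norm (cscale (\<beta> j p) (CAinv p ** cmat E)) \<le> cmod (\<beta> j p) * (norm (CAinv p) * norm (cmat E))"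
      unfolding norm_cscale by (intro mult_left_mono norm_matrix_mult_le) simp
    also have "\<dots> \<le> norm (cmat E) * (KA * KC * \<rho> p)"
      using mult_left_mono[OF good_coeff_CAinv_le[OF elim j] norm_ge_zero[of "cmat E"]] by (simp add: mult_ac)
    finally show ?case
      by (simp add: mult_ac)
  qed
  fix t :: real
  let ?B' = "B(j := B j + (- t) *\<^sub>R E)"
  have "y p - yhat qA \<alpha> A qB \<beta> ?B' qC \<gamma> C p = res p + t *\<^sub>R cscale (\<beta> j p) (CAinv p ** cmat E)" for p
    unfolding yhat_def xhat_def pmat_fun_upd[OF j] cmat_scaleR cscale_scaleR matrix_add_ldistrib
      matrix_mult_scaleR_right cscale_matrix_mult_right matrix_mul_assoc
    by (simp add: algebra_simps)
  then show "\<exists>(A'::nat \<Rightarrow> real^'r^'r) (B'::nat \<Rightarrow> real^'ni^'r) (C'::nat \<Rightarrow> real^'r^'no) Q.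
      (AE p in \<mu>. invertible (pmat qA \<alpha> A' p)) \<and> (AE p in \<mu>. norm (Q p) \<le> 0 * \<rho> p) \<and>
      (AE p in \<mu>. y p - yhat qA \<alpha> A' qB \<beta> B' qC \<gamma> C' p
         = res p + t *\<^sub>R cscale (\<beta> j p) (CAinv p ** cmat E) + t\<^sup>2 *\<^sub>R Q p)"
    using A_inv_ae by (intro exI[of _ A] exI[of _ ?B'] exI[of _ C] exI[of _ "\<lambda>_. 0"]) simp
qed simp

lemma good_perturbation_A:
  assumes g: "good p" and i: "i < qA" and t: "\<bar>t\<bar> * (inv_bound * norm (cmat E)) \<le> 1/2"
  defines "F \<equiv> cscale (\<alpha> i p) (cmat E)"
  defines "Q \<equiv> - (CAinv p ** (F ** matrix_inv (Ahat p + t *\<^sub>R F) ** F) ** xh p)"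
  shows "invertible (pmat qA \<alpha> (A(i := A i + t *\<^sub>R E)) p)"
    and "y p - yhat qA \<alpha> (A(i := A i + t *\<^sub>R E)) qB \<beta> B qC \<gamma> C p
      = res p + t *\<^sub>R cscale (\<alpha> i p) (CAinv p ** cmat E ** xh p) + t\<^sup>2 *\<^sub>R Q"
    and "norm Q \<le> 2 * inv_bound * (norm (cmat E))\<^sup>2 * (KA\<^sup>2 * KB * KC * \<rho> p)"
proof -
  have hat: "pmat qA \<alpha> (A(i := A i + t *\<^sub>R E)) p = Ahat p + t *\<^sub>R F"
    unfolding pmat_fun_upd[OF i] F_def cmat_scaleR cscale_scaleR ..
  have inv: "invertible (Ahat p)" and M: "norm (cscale (\<alpha> i p) (matrix_inv (Ahat p))) \<le> inv_bound"
    using g i by (auto simp: good_def)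
  note perturbed = invertible_perturbation_bound[OF inv M t, folded F_def]
  show "invertible (pmat qA \<alpha> (A(i := A i + t *\<^sub>R E)) p)"
    unfolding hat by (rule perturbed(1))
  have D: "CAinv p ** F ** matrix_inv (Ahat p) ** Bhat p = cscale (\<alpha> i p) (CAinv p ** cmat E ** xh p)"
    by (simp add: F_def xhat_def matrix_mul_assoc cscale_matrix_mult_left cscale_matrix_mult_right)
  have Q: "CAinv p ** (F ** matrix_inv (Ahat p + t *\<^sub>R F) ** F) ** matrix_inv (Ahat p) ** Bhat p = - Q"
    by (simp add: Q_def xhat_def matrix_mul_assoc)
  have "yhat qA \<alpha> (A(i := A i + t *\<^sub>R E)) qB \<beta> B qC \<gamma> C p
      = Chat p ** matrix_inv (Ahat p + t *\<^sub>R F) ** Bhat p"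
    unfolding yhat_def xhat_def hat by (rule matrix_mul_assoc)
  also have "\<dots> = yh p - t *\<^sub>R cscale (\<alpha> i p) (CAinv p ** cmat E ** xh p) + t\<^sup>2 *\<^sub>R (- Q)"
    by (rule trans[OF transfer_perturbation_expansion[OF inv perturbed(1)]])
      (unfold D Q, simp only: yhat_def xhat_def matrix_mul_assoc)
  finally show "y p - yhat qA \<alpha> (A(i := A i + t *\<^sub>R E)) qB \<beta> B qC \<gamma> C p
      = res p + t *\<^sub>R cscale (\<alpha> i p) (CAinv p ** cmat E ** xh p) + t\<^sup>2 *\<^sub>R Q"
    by (simp add: algebra_simps)
  have "norm (F ** matrix_inv (Ahat p + t *\<^sub>R F) ** F)
      = cmod (\<alpha> i p) * norm (cmat E ** cscale (\<alpha> i p) (matrix_inv (Ahat p + t *\<^sub>R F)) ** cmat E)"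
    by (simp add: F_def cscale_matrix_mult_left cscale_matrix_mult_right norm_cscale)
  also have "\<dots> \<le> cmod (\<alpha> i p) * (2 * inv_bound * (norm (cmat E))\<^sup>2)"
  proof (rule mult_left_mono)
    let ?Z = "cscale (\<alpha> i p) (matrix_inv (Ahat p + t *\<^sub>R F))"
    have "norm (cmat E) * norm ?Z * norm (cmat E) \<le> norm (cmat E) * (2 * inv_bound) * norm (cmat E)"
      using perturbed(2) by (intro mult_right_mono mult_left_mono) auto
    then show "norm (cmat E ** ?Z ** cmat E) \<le> 2 * inv_bound * (norm (cmat E))\<^sup>2"
      using norm_matrix_mult3_le[of "cmat E" ?Z "cmat E"] by (simp add: power2_eq_square mult_ac)
  qed simp
  finally have FAF: "norm (F ** matrix_inv (Ahat p + t *\<^sub>R F) ** F)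
      \<le> cmod (\<alpha> i p) * (2 * inv_bound * (norm (cmat E))\<^sup>2)" .
  have "norm Q \<le> norm (CAinv p) * norm (F ** matrix_inv (Ahat p + t *\<^sub>R F) ** F) * norm (xh p)"
    unfolding Q_def norm_minus_cancel by (rule norm_matrix_mult3_le)
  also have "\<dots> \<le> norm (CAinv p) * (cmod (\<alpha> i p) * (2 * inv_bound * (norm (cmat E))\<^sup>2)) * norm (xh p)"
    using FAF by (intro mult_right_mono mult_left_mono) auto
  also have "\<dots> = 2 * inv_bound * (norm (cmat E))\<^sup>2 * (cmod (\<alpha> i p) * norm (CAinv p) * norm (xh p))"
    by (simp add: mult_ac)
  also have "\<dots> \<le> 2 * inv_bound * (norm (cmat E))\<^sup>2 * (KA\<^sup>2 * KB * KC * \<rho> p)"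
    using good_coeff_CAinv_xh_le[OF g i] inv_bound_nonneg by (intro mult_left_mono) auto
  finally show "norm Q \<le> 2 * inv_bound * (norm (cmat E))\<^sup>2 * (KA\<^sup>2 * KB * KC * \<rho> p)" .
qed

lemma stationary_A:
  assumes i: "i < qA"
  shows "(\<integral>p. inner (res p) (cscale (\<alpha> i p) (CAinv p ** cmat E ** xh p)) \<partial>\<mu>) = 0"
proof (rule stationary_direction[where K = "norm (cmat E) * (KA\<^sup>2 * KB * KC)"
      and K' = "2 * inv_bound * (norm (cmat E))\<^sup>2 * (KA\<^sup>2 * KB * KC)"
      and \<delta> = "1 / (2 * (inv_bound * norm (cmat E) + 1))"])
  have [measurable]: "\<alpha> i \<in> borel_measurable \<mu>"
    using \<alpha>_meas i by auto
  show "(\<lambda>p. cscale (\<alpha> i p) (CAinv p ** cmat E ** xh p)) \<in> borel_measurable \<mu>"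
    by measurable
  show "AE p in \<mu>. norm (cscale (\<alpha> i p) (CAinv p ** cmat E ** xh p)) \<le> norm (cmat E) * (KA\<^sup>2 * KB * KC) * \<rho> p"
    using AE_good
  proof eventually_elim
    case (elim p)
    have "norm (cscale (\<alpha> i p) (CAinv p ** cmat E ** xh p))
        \<le> cmod (\<alpha> i p) * (norm (CAinv p) * norm (cmat E) * norm (xh p))"
      unfolding norm_cscale by (intro mult_left_mono norm_matrix_mult3_le) simp
    also have "\<dots> = norm (cmat E) * (cmod (\<alpha> i p) * norm (CAinv p) * norm (xh p))"
      by (simp add: mult_ac)
    also have "\<dots> \<le> norm (cmat E) * (KA\<^sup>2 * KB * KC * \<rho> p)"
      using good_coeff_CAinv_xh_le[OF elim i] by (intro mult_left_mono) auto
    finally show ?case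
      by (simp add: mult_ac)
  qed
  have X: "0 \<le> inv_bound * norm (cmat E)"
    using inv_bound_nonneg by simp
  then show "0 < 1 / (2 * (inv_bound * norm (cmat E) + 1))"
    by simp
  fix t :: real
  assume "0 < \<bar>t\<bar>" "\<bar>t\<bar> < 1 / (2 * (inv_bound * norm (cmat E) + 1))"
  then have "2 * (\<bar>t\<bar> * (inv_bound * norm (cmat E))) + 2 * \<bar>t\<bar> < 1"
    using X by (simp add: pos_less_divide_eq algebra_simps)
  then have t: "\<bar>t\<bar> * (inv_bound * norm (cmat E)) \<le> 1/2"
    by linarith
  let ?A' = "A(i := A i + t *\<^sub>R E)" and ?F = "\<lambda>p. cscale (\<alpha> i p) (cmat E)"
  let ?Q = "\<lambda>p. - (CAinv p ** (?F p ** matrix_inv (Ahat p + t *\<^sub>R ?F p) ** ?F p) ** xh p)"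
  note perturbed = good_perturbation_A[OF _ i t]
  show "\<exists>(A'::nat \<Rightarrow> real^'r^'r) (B'::nat \<Rightarrow> real^'ni^'r) (C'::nat \<Rightarrow> real^'r^'no) Q.
      (AE p in \<mu>. invertible (pmat qA \<alpha> A' p)) \<and>
      (AE p in \<mu>. norm (Q p) \<le> 2 * inv_bound * (norm (cmat E))\<^sup>2 * (KA\<^sup>2 * KB * KC) * \<rho> p) \<and>
      (AE p in \<mu>. y p - yhat qA \<alpha> A' qB \<beta> B' qC \<gamma> C' p
         = res p + t *\<^sub>R cscale (\<alpha> i p) (CAinv p ** cmat E ** xh p) + t\<^sup>2 *\<^sub>R Q p)"
  proof (intro exI[of _ ?A'] exI[of _ B] exI[of _ C] exI[of _ ?Q] conjI)
    show "AE p in \<mu>. invertible (pmat qA \<alpha> ?A' p)"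
      using AE_good by eventually_elim (rule perturbed(1))
    show "AE p in \<mu>. norm (?Q p) \<le> 2 * inv_bound * (norm (cmat E))\<^sup>2 * (KA\<^sup>2 * KB * KC) * \<rho> p"
      using AE_good by eventually_elim (use perturbed(3) in \<open>simp add: mult_ac\<close>)
    show "AE p in \<mu>. y p - yhat qA \<alpha> ?A' qB \<beta> B qC \<gamma> C p
        = res p + t *\<^sub>R cscale (\<alpha> i p) (CAinv p ** cmat E ** xh p) + t\<^sup>2 *\<^sub>R ?Q p"
      using AE_good by eventually_elim (rule perturbed(2))
  qed
qed

text \<open>The integrand is conjugation symmetric, so its integral is real. Read through
  \<open>inner_cscale_matrix_unit\<close>, the stationarity hypothesis says that its real part vanishes
  entrywise.\<close>
lemma residual_moment_eq_0:
  fixes g :: "complex^'np \<Rightarrow> complex" and U :: "complex^'np \<Rightarrow> complex^'s^'no"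
    and V :: "complex^'np \<Rightarrow> complex^'ni^'t"
  assumes [measurable]: "g \<in> borel_measurable \<mu>" "U \<in> borel_measurable \<mu>" "V \<in> borel_measurable \<mu>"
    and g_conj: "\<And>p. p \<in> P \<Longrightarrow> g (vconj p) = cnj (g p)"
    and UV_conj: "\<And>p. good p \<Longrightarrow> U (vconj p) = mconj (U p) \<and> V (vconj p) = mconj (V p)"
    and W: "integrable \<mu> (\<lambda>p. cscale (cnj (g p)) (mstar (U p) ** res p ** mstar (V p)))"
    and stationary: "\<And>E. (\<integral>p. inner (res p) (cscale (g p) (U p ** cmat E ** V p)) \<partial>\<mu>) = 0"
  shows "(\<integral>p. cscale (cnj (g p)) (mstar (U p) ** res p ** mstar (V p)) \<partial>\<mu>) = 0"
proof (rule integral_matrix_eq_0I[OF W])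
  show "mconj (\<integral>p. cscale (cnj (g p)) (mstar (U p) ** res p ** mstar (V p)) \<partial>\<mu>)
      = (\<integral>p. cscale (cnj (g p)) (mstar (U p) ** res p ** mstar (V p)) \<partial>\<mu>)"
  proof (rule mconj_integral_eq_if_symmetric[OF vconj_measurable distr_vconj])
    show "AE p in \<mu>. cscale (cnj (g (vconj p))) (mstar (U (vconj p)) ** res (vconj p) ** mstar (V (vconj p)))
        = mconj (cscale (cnj (g p)) (mstar (U p) ** res p ** mstar (V p)))"
      using AE_good by eventually_elim
        (simp add: good_def g_conj UV_conj res_vconj mconj_cscale mconj_matrix_mult mconj_mstar)
  qed measurable
  show "(\<integral>p. Re (cscale (cnj (g p)) (mstar (U p) ** res p ** mstar (V p)) $ a $ c) \<partial>\<mu>) = 0" for a c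
    using stationary[of "axis a (axis c 1)"] by (simp add: inner_cscale_matrix_unit)
qed

lemma moment_matching:
  fixes g :: "complex^'np \<Rightarrow> complex" and U :: "complex^'np \<Rightarrow> complex^'s^'no"
    and V :: "complex^'np \<Rightarrow> complex^'ni^'t" and X :: "complex^'np \<Rightarrow> complex^'no^'s"
  assumes [measurable]: "g \<in> borel_measurable \<mu>" "U \<in> borel_measurable \<mu>" "V \<in> borel_measurable \<mu>"
      "X \<in> borel_measurable \<mu>"
    and g_conj: "\<And>p. p \<in> P \<Longrightarrow> g (vconj p) = cnj (g p)"
    and UV_conj: "\<And>p. good p \<Longrightarrow> U (vconj p) = mconj (U p) \<and> V (vconj p) = mconj (V p)"
    and X_eq: "AE p in \<mu>. X p = mstar (U p)"
    and bound: "AE p in \<mu>. cmod (g p) * norm (U p) * norm (V p) \<le> K * \<rho> p"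
    and stationary: "\<And>E. (\<integral>p. inner (res p) (cscale (g p) (U p ** cmat E ** V p)) \<partial>\<mu>) = 0"
  shows "(\<integral>p. cscale (g (vconj p)) (X p ** y p ** mstar (V p)) \<partial>\<mu>)
    = (\<integral>p. cscale (g (vconj p)) (X p ** yh p ** mstar (V p)) \<partial>\<mu>)"
proof -
  let ?F = "\<lambda>z p. cscale (g (vconj p)) (X p ** z p ** mstar (V p))"
  let ?W = "\<lambda>p. cscale (cnj (g p)) (mstar (U p) ** res p ** mstar (V p))"
  have le: "AE p in \<mu>. norm (?F z p) \<le> K * \<rho> p * norm (z p)" for z :: "complex^'np \<Rightarrow> complex^'ni^'no"
    using AE_good X_eq bound
  proof eventually_elim
    case (elim p)
    then have "norm (?F z p) \<le> cmod (g p) * (norm (U p) * norm (z p) * norm (V p))"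
      using g_conj[of p] norm_matrix_mult3_le[of "mstar (U p)" "z p" "mstar (V p)"]
      by (simp add: good_def norm_cscale norm_mstar mult_left_mono)
    also have "\<dots> = cmod (g p) * norm (U p) * norm (V p) * norm (z p)"
      by (simp add: mult_ac)
    also have "\<dots> \<le> K * \<rho> p * norm (z p)"
      using elim(3) by (rule mult_right_mono) simp
    finally show ?case .
  qed
  have int_y: "integrable \<mu> (?F y)"
    by (rule integrable_if_norm_le_product[OF _ integrable_\<rho>2 integrable_y2 le]) measurable
  have int_yh: "integrable \<mu> (?F yh)"
    by (rule integrable_if_norm_le_product[OF _ integrable_\<rho>2 integrable_yh2 le]) measurable
  have diff: "AE p in \<mu>. ?F y p - ?F yh p = ?W p"
    using AE_good X_eq
    by eventually_elim (simp add: good_def g_conj cscale_diff matrix_mult_diff_left matrix_mult_diff_right)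
  have "integrable \<mu> ?W"
    using Bochner_Integration.integrable_diff[OF int_y int_yh] _ diff by (rule integrable_cong_AE_imp) measurable
  have "integral\<^sup>L \<mu> (?F y) - integral\<^sup>L \<mu> (?F yh) = (\<integral>p. ?F y p - ?F yh p \<partial>\<mu>)"
    using Bochner_Integration.integral_diff[OF int_y int_yh] by simp
  also have "\<dots> = integral\<^sup>L \<mu> ?W"
    using diff by (intro integral_cong_AE) measurable
  also have "\<dots> = 0"
    by (rule residual_moment_eq_0) (use assms \<open>integrable \<mu> ?W\<close> in auto)
  finally show ?thesis
    by simp
qed

lemma moment_matching_C:
  assumes k: "k < qC"
  shows "(\<integral>p. cscale (\<gamma> k (vconj p)) (y p ** mstar (xh p)) \<partial>\<mu>)
    = (\<integral>p. cscale (\<gamma> k (vconj p)) (yh p ** mstar (xh p)) \<partial>\<mu>)"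
proof -
  have [measurable]: "\<gamma> k \<in> borel_measurable \<mu>"
    using \<gamma>_meas k by auto
  have "AE p in \<mu>. cmod (\<gamma> k p) * norm (mat 1 :: complex^'no^'no) * norm (xh p)
      \<le> norm (mat 1 :: complex^'no^'no) * KA * KB * \<rho> p"
    using AE_good
  proof eventually_elim
    case (elim p)
    from mult_left_mono[OF good_coeff_xh_le[OF elim k] norm_ge_zero[of "mat 1 :: complex^'no^'no"]]
    show ?case
      by (simp add: mult_ac)
  qed
  from moment_matching[where U = "\<lambda>_. mat 1" and X = "\<lambda>_. mat 1", OF _ _ _ _ _ _ _ this]
  show ?thesis
    using \<gamma>_conj k xh_vconj stationary_C[OF k] by simp
qed

lemma moment_matching_B:
  assumes j: "j < qB"
  shows "(\<integral>p. cscale (\<beta> j (vconj p)) (xd p ** y p) \<partial>\<mu>)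
    = (\<integral>p. cscale (\<beta> j (vconj p)) (xd p ** yh p) \<partial>\<mu>)"
proof -
  have [measurable]: "\<beta> j \<in> borel_measurable \<mu>"
    using \<beta>_meas j by auto
  have "AE p in \<mu>. cmod (\<beta> j p) * norm (CAinv p) * norm (mat 1 :: complex^'ni^'ni)
      \<le> norm (mat 1 :: complex^'ni^'ni) * KA * KC * \<rho> p"
    using AE_good
  proof eventually_elim
    case (elim p)
    from mult_left_mono[OF good_coeff_CAinv_le[OF elim j] norm_ge_zero[of "mat 1 :: complex^'ni^'ni"]]
    show ?case
      by (simp add: mult_ac)
  qed
  from moment_matching[where V = "\<lambda>_. mat 1" and X = xd, OF _ _ _ _ _ _ _ this]
  show ?thesis
    using \<beta>_conj j CAinv_vconj stationary_B[OF j] AE_good good_xd_eq by (simp add: eventually_mono)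
qed

lemma moment_matching_A:
  assumes i: "i < qA"
  shows "(\<integral>p. cscale (\<alpha> i (vconj p)) (xd p ** y p ** mstar (xh p)) \<partial>\<mu>)
    = (\<integral>p. cscale (\<alpha> i (vconj p)) (xd p ** yh p ** mstar (xh p)) \<partial>\<mu>)"
proof -
  have [measurable]: "\<alpha> i \<in> borel_measurable \<mu>"
    using \<alpha>_meas i by auto
  have "AE p in \<mu>. cmod (\<alpha> i p) * norm (CAinv p) * norm (xh p) \<le> KA\<^sup>2 * KB * KC * \<rho> p"
    using AE_good by eventually_elim (rule good_coeff_CAinv_xh_le[OF _ i])
  from moment_matching[where X = xd, OF _ _ _ _ _ _ _ this]
  show ?thesis
    using \<alpha>_conj i CAinv_vconj xh_vconj stationary_A[OF i] AE_good good_xd_eq by (simp add: eventually_mono)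
qed

end

theorem corollary2p3:
  fixes P :: "(complex^'np) set"
    and \<mu> :: "(complex^'np) measure"
    and y :: "complex^'np \<Rightarrow> complex^'ni^'no"
    and qA qB qC :: nat
    and \<alpha> \<beta> \<gamma> :: "nat \<Rightarrow> complex^'np \<Rightarrow> complex"
    and A :: "nat \<Rightarrow> real^'r^'r"
    and B :: "nat \<Rightarrow> real^'ni^'r"
    and C :: "nat \<Rightarrow> real^'r^'no"
  assumes P_conj: "\<forall>p\<in>P. vconj p \<in> P"
    and space_mu: "space \<mu> = P"
    and mu_conj: "\<forall>S\<in>sets \<mu>. vconj ` S \<in> sets \<mu> \<and> emeasure \<mu> (vconj ` S) = emeasure \<mu> S"
    and y_meas: "y \<in> borel_measurable \<mu>"
    and y_conj: "\<forall>p\<in>P. mconj (y p) = y (vconj p)"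
    and y_L2: "(\<integral>\<^sup>+ p. ennreal ((fro_norm (y p))\<^sup>2) \<partial>\<mu>) < \<infinity>"
    and \<alpha>_meas: "\<forall>i<qA. \<alpha> i \<in> borel_measurable \<mu>"
    and \<beta>_meas: "\<forall>j<qB. \<beta> j \<in> borel_measurable \<mu>"
    and \<gamma>_meas: "\<forall>k<qC. \<gamma> k \<in> borel_measurable \<mu>"
    and \<alpha>_conj: "\<forall>i<qA. \<forall>p\<in>P. cnj (\<alpha> i p) = \<alpha> i (vconj p)"
    and \<beta>_conj: "\<forall>j<qB. \<forall>p\<in>P. cnj (\<beta> j p) = \<beta> j (vconj p)"
    and \<gamma>_conj: "\<forall>k<qC. \<forall>p\<in>P. cnj (\<gamma> k p) = \<gamma> k (vconj p)"
    and ratio_L2: "(\<integral>\<^sup>+ p. (ennreal ((\<Sum>j<qB. cmod (\<beta> j p)) * (\<Sum>k<qC. cmod (\<gamma> k p)))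
                          / ennreal (\<Sum>i<qA. cmod (\<alpha> i p)))\<^sup>2 \<partial>\<mu>) < \<infinity>"
    and A_inv_ae: "AE p in \<mu>. invertible (pmat qA \<alpha> A p)"
    and A_esssup: "\<forall>i<qA. esssup \<mu> (\<lambda>p. ereal (fro_norm (cscale (\<alpha> i p) (matrix_inv (pmat qA \<alpha> A p))))) < \<infinity>"
    and optimal: "\<forall>(A'::nat \<Rightarrow> real^'r^'r) (B'::nat \<Rightarrow> real^'ni^'r) (C'::nat \<Rightarrow> real^'r^'no).
                    (AE p in \<mu>. invertible (pmat qA \<alpha> A' p)) \<longrightarrow>
                    Jerr \<mu> y qA \<alpha> A qB \<beta> B qC \<gamma> C \<le> Jerr \<mu> y qA \<alpha> A' qB \<beta> B' qC \<gamma> C'"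
  shows "(\<forall>k<qC.
            (\<integral>p. cscale (\<gamma> k (vconj p)) (y p ** mstar (xhat qA \<alpha> A qB \<beta> B p)) \<partial>\<mu>) =
            (\<integral>p. cscale (\<gamma> k (vconj p)) (yhat qA \<alpha> A qB \<beta> B qC \<gamma> C p ** mstar (xhat qA \<alpha> A qB \<beta> B p)) \<partial>\<mu>))
       \<and> (\<forall>j<qB.
            (\<integral>p. cscale (\<beta> j (vconj p)) (xdual qA \<alpha> A qC \<gamma> C p ** y p) \<partial>\<mu>) =
            (\<integral>p. cscale (\<beta> j (vconj p)) (xdual qA \<alpha> A qC \<gamma> C p ** yhat qA \<alpha> A qB \<beta> B qC \<gamma> C p) \<partial>\<mu>))
       \<and> (\<forall>i<qA.
            (\<integral>p. cscale (\<alpha> i (vconj p)) (xdual qA \<alpha> A qC \<gamma> C p ** y p ** mstar (xhat qA \<alpha> A qB \<beta> B p)) \<partial>\<mu>) =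
            (\<integral>p. cscale (\<alpha> i (vconj p)) (xdual qA \<alpha> A qC \<gamma> C p ** yhat qA \<alpha> A qB \<beta> B qC \<gamma> C p ** mstar (xhat qA \<alpha> A qB \<beta> B p)) \<partial>\<mu>))"
proof -
  interpret l2_optimal_rom P \<mu> y qA qB qC \<alpha> \<beta> \<gamma> A B C
    by (rule l2_optimal_rom.intro) (fact assms)+
  show ?thesis
    using moment_matching_C moment_matching_B moment_matching_A by blast
qed

end
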